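(* Let $F$ be a $\mathrm{DMBPP}(\lambda,\Psi_\eta,\Psi_z,\mathcal{V},\mathcal{H})$, a $\theta\mathrm{DMBPP}(\lambda,\Psi_\eta,\mathcal{V},\Psi_\theta)$, or a $w\mathrm{DMBPP}(\lambda,\Psi_v,\Psi_z,\mathcal{H})$. Assume that $x\in\mathcal{X}$ contains only continuous components and that $\mathcal{X}$ is compact. Assume (each condition applying to those ingredients present in the given version): (i) for every $\epsilon>0$, every continuous map $g:\mathcal{X}\to\Delta_m^0$ and every $j\ge1$, $\Pr\{\sup_{x\in\mathcal{X}}\|h_x(z_j(x))-g(x)\|<\epsilon\}>0$; (ii) for every $\epsilon>0$, every continuous map $g:\mathcal{X}\to[0,1]$ and every $j\ge1$, $\Pr\{\sup_{x\in\mathcal{X}}|v_x(\eta_j(x))-g(x)|<\epsilon\}>0$; (iii) $k$ has full support on $\mathbb{N}$; (iv) $v_j$, $j\ge1$, has full support on $[0,1]$; (v) $\theta_j$, $j\ge1$, has full support on $\Delta_m^0$. Then $\tilde{\mathcal{D}}(\Delta_m)^{\mathcal{X}}$ is contained in the support of $F$ under the $L_\infty$ topology, i.e., every $L_\infty$-neighborhood of every element of $\tilde{\mathcal{D}}(\Delta_m)^{\mathcal{X}}$ has positive probability under the law of $F$.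
   Context: Let $m,p\ge 1$. $\Delta_m=\{y\in[0,1]^m:\sum_{i=1}^m y_i\le 1\}$, $\Delta_m^0=\{y\in\Delta_m: y_i>0\ \forall i\}$. $\mathrm{dir}(y\mid\alpha)$, $\alpha=(\alpha_1,\dots,\alpha_{m+1})$, is the $m$-dimensional Dirichlet density $\frac{\Gamma(\sum_i\alpha_i)}{\prod_i\Gamma(\alpha_i)}\prod_{i=1}^m y_i^{\alpha_i-1}(1-\sum_i y_i)^{\alpha_{m+1}-1}$. For $k\in\mathbb{N}=\{1,2,\dots\}$, $\alpha(k,\mathbf{j})=(j_1,\dots,j_m,k+m-\|\mathbf{j}\|_1)$ and $\lceil k\theta\rceil=(\lceil k\theta_1\rceil,\dots,\lceil k\theta_m\rceil)$. $\mathcal{X}\subseteq\mathbb{R}^p$. $\mathcal{V}=\{v_x\}$, $\mathcal{H}=\{h_x\}$ are sets of known continuous functions (described as bijective) $v_x:\mathbb{R}\to[0,1]$, $h_x:\mathbb{R}^m\to\Delta_m^0$ with $x\mapsto v_x(a)$, $x\mapsto h_x(b)$ continuous for all $a,b$. DMBPP$(\lambda,\Psi_\eta,\Psi_z,\mathcal{V},\mathcal{H})$: $\eta_j$, $j\ge1$, i.i.d. real-valued processes on $\mathcal{X}$ (law indexed by finite-dimensional $\Psi_\eta$); $z_j$, $j\ge1$, i.i.d. $\mathbb{R}^m$-valued processes on $\mathcal{X}$ (law indexed by $\Psi_z$); $k\in\mathbb{N}$ random (law indexed by $\lambda$); $F_x$ has Lebesgue density $f_x(\cdot)=\sum_{j\ge1}w_j(x)\mathrm{dir}(\cdot\mid\alpha(k,\lceil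 k\theta_j(x)\rceil))$, $\theta_j(x)=h_x(z_j(x))$, $w_j(x)=V_j(x)\prod_{l<j}(1-V_l(x))$, $V_j(x)=v_x(\eta_j(x))$. $w\mathrm{DMBPP}(\lambda,\Psi_v,\Psi_z,\mathcal{H})$: weights replaced by $w_j=v_j\prod_{l<j}(1-v_l)$ with $v_j$ i.i.d. $[0,1]$-valued (law indexed by $\Psi_v$). $\theta\mathrm{DMBPP}(\lambda,\Psi_\eta,\mathcal{V},\Psi_\theta)$: atoms replaced by $\theta_j$ i.i.d. $\Delta_m^0$-valued (law indexed by $\Psi_\theta$), independent of $x$. $\mathcal{D}(\Delta_m)$: probability measures on $\Delta_m$ absolutely continuous w.r.t. Lebesgue measure with continuous density. $\tilde{\mathcal{D}}(\Delta_m)^{\mathcal{X}}=\{\{Q_x:x\in\mathcal{X}\}\in\mathcal{D}(\Delta_m)^{\mathcal{X}}: (y,x)\mapsto q_x(y)\text{ is continuous}\}$, $q_x$ the density of $Q_x$. The $L_\infty$ topology on $\mathcal{D}(\Delta_m)^{\mathcal{X}}$ is induced by $\sup_{x\in\mathcal{X}}\sup_{y\in\Delta_m}|q_x(y)-q'_x(y)|$. *)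

theory Defs
  imports "HOL-Probability.Probability"
begin

text \<open>Points of R^m are vectors of type real^'m; m = CARD('m).\<close>

definition Dm :: "(real^'m) set" where
  "Dm = {y. (\<forall>i. 0 \<le> y$i \<and> y$i \<le> 1) \<and> (\<Sum>i\<in>UNIV. y$i) \<le> 1}"

definition Dm0 :: "(real^'m) set" where
  "Dm0 = {y \<in> Dm. \<forall>i. 0 < y$i}"

text \<open>m-dimensional Dirichlet density dir(y | a_1..a_m, b), here for positive integer
  parameters (the only ones occurring in the model).\<close>
definition dir_dens :: "nat^'m \<Rightarrow> nat \<Rightarrow> real^'m \<Rightarrow> real" where
  "dir_dens a b y =
     Gamma (real ((\<Sum>i\<in>UNIV. a$i) + b)) / ((\<Prod>i\<in>UNIV. Gamma (real (a$i))) * Gamma (real b))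
     * (\<Prod>i\<in>UNIV. (y$i) ^ (a$i - 1)) * (1 - (\<Sum>i\<in>UNIV. y$i)) ^ (b - 1)"

definition ceil_vec :: "nat \<Rightarrow> real^'m \<Rightarrow> nat^'m" where
  "ceil_vec k \<theta> = (\<chi> i. nat \<lceil>real k * \<theta>$i\<rceil>)"

text \<open>dir(y | alpha(k, ceil(k theta))), alpha(k,j) = (j_1,..,j_m, k + m - |j|_1)\<close>
definition bern_dens :: "nat \<Rightarrow> real^'m \<Rightarrow> real^'m \<Rightarrow> real" where
  "bern_dens k \<theta> y =
     dir_dens (ceil_vec k \<theta>) (k + CARD('m) - (\<Sum>i\<in>UNIV. ceil_vec k \<theta> $ i)) y"

text \<open>stick-breaking weights (index j = 0,1,2,... corresponds to j = 1,2,3,...)\<close>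
definition stick :: "(nat \<Rightarrow> real) \<Rightarrow> nat \<Rightarrow> real" where
  "stick V j = V j * (\<Prod>l<j. 1 - V l)"

definition mix_dens :: "nat \<Rightarrow> (nat \<Rightarrow> 'x \<Rightarrow> real) \<Rightarrow> (nat \<Rightarrow> 'x \<Rightarrow> real^'m) \<Rightarrow> 'x \<Rightarrow> real^'m \<Rightarrow> real" where
  "mix_dens k V \<theta> x y = (\<Sum>j. stick (\<lambda>l. V l x) j * bern_dens k (\<theta> j x) y)"

definition Dtilde :: "'x::topological_space set \<Rightarrow> ('x \<Rightarrow> real^'m \<Rightarrow> real) set" where
  "Dtilde X = {q. (\<forall>x\<in>X. (\<forall>y\<in>Dm. 0 \<le> q x y) \<and> (q x has_integral 1) Dm)
                 \<and> continuous_on (Dm \<times> X) (\<lambda>(y,x). q x y)}"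

definition Linf_dist :: "'x set \<Rightarrow> ('x \<Rightarrow> real^'m \<Rightarrow> real) \<Rightarrow> ('x \<Rightarrow> real^'m \<Rightarrow> real) \<Rightarrow> ereal" where
  "Linf_dist X f q = (SUP x\<in>X. SUP y\<in>Dm. ereal \<bar>f x y - q x y\<bar>)"

definition pos_prob_in :: "'a measure \<Rightarrow> 'a set set \<Rightarrow> 'a set \<Rightarrow> bool" where
  "pos_prob_in M F E \<longleftrightarrow> (\<exists>A\<in>F. A \<subseteq> E \<and> measure M A > 0)"

definition in_Linf_support :: "'a measure \<Rightarrow> 'x set \<Rightarrow> ('a \<Rightarrow> 'x \<Rightarrow> real^'m \<Rightarrow> real)
    \<Rightarrow> ('x \<Rightarrow> real^'m \<Rightarrow> real) \<Rightarrow> bool" where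
  "in_Linf_support M X F q \<longleftrightarrow>
     (\<forall>\<epsilon>>0. pos_prob_in M (sets M) {\<omega>\<in>space M. Linf_dist X (F \<omega>) q < ereal \<epsilon>})"

definition proc_sigma :: "'a measure \<Rightarrow> 'x set \<Rightarrow> ('a \<Rightarrow> 'x \<Rightarrow> 'b::topological_space) \<Rightarrow> 'a set set" where
  "proc_sigma M X \<xi> = sets (vimage_algebra (space M) (\<lambda>\<omega>. restrict (\<xi> \<omega>) X) (PiM X (\<lambda>_. borel)))"

definition rv_sigma :: "'a measure \<Rightarrow> ('a \<Rightarrow> 'b::topological_space) \<Rightarrow> 'a set set" where
  "rv_sigma M \<xi> = sets (vimage_algebra (space M) \<xi> borel)"

definition nat_sigma :: "'a measure \<Rightarrow> ('a \<Rightarrow> nat) \<Rightarrow> 'a set set" where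
  "nat_sigma M k = sets (vimage_algebra (space M) k (count_space UNIV))"

definition iid_procs :: "'a measure \<Rightarrow> 'x set \<Rightarrow> (nat \<Rightarrow> 'a \<Rightarrow> 'x \<Rightarrow> 'b::topological_space) \<Rightarrow> bool" where
  "iid_procs M X \<xi> \<longleftrightarrow>
     (\<forall>j. (\<lambda>\<omega>. restrict (\<xi> j \<omega>) X) \<in> measurable M (PiM X (\<lambda>_. borel))) \<and>
     (\<forall>j. distr M (PiM X (\<lambda>_. borel)) (\<lambda>\<omega>. restrict (\<xi> j \<omega>) X)
          = distr M (PiM X (\<lambda>_. borel)) (\<lambda>\<omega>. restrict (\<xi> 0 \<omega>) X))"

definition iid_rvs :: "'a measure \<Rightarrow> 'b::topological_space set \<Rightarrow> (nat \<Rightarrow> 'a \<Rightarrow> 'b) \<Rightarrow> bool" where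
  "iid_rvs M S \<xi> \<longleftrightarrow>
     (\<forall>j. \<xi> j \<in> borel_measurable M) \<and> (\<forall>j. \<forall>\<omega>\<in>space M. \<xi> j \<omega> \<in> S) \<and>
     (\<forall>j. distr M borel (\<xi> j) = distr M borel (\<xi> 0))"

definition nat_rv :: "'a measure \<Rightarrow> ('a \<Rightarrow> nat) \<Rightarrow> bool" where
  "nat_rv M k \<longleftrightarrow> k \<in> measurable M (count_space UNIV) \<and> (\<forall>\<omega>\<in>space M. 1 \<le> k \<omega>)"

datatype idx = IK | IW nat | IA nat

definition indep_ingredients :: "'a measure \<Rightarrow> 'a set set \<Rightarrow> (nat \<Rightarrow> 'a set set) \<Rightarrow> (nat \<Rightarrow> 'a set set) \<Rightarrow> bool" where
  "indep_ingredients M Fk Fw Fa \<longleftrightarrow>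
     prob_space.indep_sets M (\<lambda>i. case i of IK \<Rightarrow> Fk | IW j \<Rightarrow> Fw j | IA j \<Rightarrow> Fa j) UNIV"

definition V_family :: "'x::topological_space set \<Rightarrow> ('x \<Rightarrow> real \<Rightarrow> real) \<Rightarrow> bool" where
  "V_family X v \<longleftrightarrow> (\<forall>x. continuous_on UNIV (v x) \<and> inj (v x) \<and> range (v x) \<subseteq> {0..1}) \<and>
                     (\<forall>a. continuous_on X (\<lambda>x. v x a))"

definition H_family :: "'x::topological_space set \<Rightarrow> ('x \<Rightarrow> real^'m \<Rightarrow> real^'m) \<Rightarrow> bool" where
  "H_family X h \<longleftrightarrow> (\<forall>x. continuous_on UNIV (h x) \<and> inj (h x) \<and> range (h x) \<subseteq> Dm0) \<and>
                     (\<forall>b. continuous_on X (\<lambda>x. h x b))"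

definition cond_i :: "'a measure \<Rightarrow> 'x::topological_space set \<Rightarrow> (nat \<Rightarrow> 'a \<Rightarrow> 'x \<Rightarrow> real^'m)
    \<Rightarrow> ('x \<Rightarrow> real^'m \<Rightarrow> real^'m) \<Rightarrow> bool" where
  "cond_i M X z h \<longleftrightarrow> (\<forall>\<epsilon>>0. \<forall>g. continuous_on X g \<and> g ` X \<subseteq> Dm0 \<longrightarrow> (\<forall>j.
      pos_prob_in M (proc_sigma M X (z j))
        {\<omega>\<in>space M. (SUP x\<in>X. ereal (norm (h x (z j \<omega> x) - g x))) < ereal \<epsilon>}))"

definition cond_ii :: "'a measure \<Rightarrow> 'x::topological_space set \<Rightarrow> (nat \<Rightarrow> 'a \<Rightarrow> 'x \<Rightarrow> real)
    \<Rightarrow> ('x \<Rightarrow> real \<Rightarrow> real) \<Rightarrow> bool" where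
  "cond_ii M X \<eta> v \<longleftrightarrow> (\<forall>\<epsilon>>0. \<forall>g. continuous_on X g \<and> g ` X \<subseteq> {0..1} \<longrightarrow> (\<forall>j.
      pos_prob_in M (proc_sigma M X (\<eta> j))
        {\<omega>\<in>space M. (SUP x\<in>X. ereal \<bar>v x (\<eta> j \<omega> x) - g x\<bar>) < ereal \<epsilon>}))"

definition cond_iii :: "'a measure \<Rightarrow> ('a \<Rightarrow> nat) \<Rightarrow> bool" where
  "cond_iii M k \<longleftrightarrow> (\<forall>n\<ge>1. measure M {\<omega>\<in>space M. k \<omega> = n} > 0)"

definition full_support :: "'a measure \<Rightarrow> 'b::topological_space set \<Rightarrow> ('a \<Rightarrow> 'b) \<Rightarrow> bool" where
  "full_support M S \<xi> \<longleftrightarrow> (\<forall>U. open U \<and> U \<inter> S \<noteq> {} \<longrightarrow> measure M {\<omega>\<in>space M. \<xi> \<omega> \<in> U} > 0)"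

end

theory Submission
  imports Defs
begin

text \<open>
  Every \<open>q \<in> Dtilde X\<close> is approximated uniformly in \<open>(x, y)\<close> by a finite mixture
  \<open>\<Sum>\<^sub>l c\<^sub>l(x) dir(y | \<alpha>(k, \<lceil>k \<xi>\<^sub>l\<rceil>))\<close> with fixed atoms \<open>\<xi>\<^sub>l \<in> \<Delta>\<^sub>m\<^sup>0\<close> and continuous positive weights
  summing to one: the multivariate Bernstein polynomial of degree \<open>n\<close> of \<open>q x\<close> is a combination of
  exactly these Dirichlet densities with \<open>k = n + 1\<close>; dividing by its mass and mixing in a small
  uniform weight makes it a mixture with positive weights. The atoms are centres of the cells on
  which \<open>\<lceil>k \<theta>\<rceil>\<close> is constant, so every atom within a fixed radius \<open>r\<close> of \<open>\<xi>\<^sub>l\<close> gives the same density.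

  If the weights may depend on \<open>x\<close> (DMBPP and \<open>\<theta>\<close>DMBPP), the event that \<open>k = n + 1\<close>, that the
  first \<open>L\<close> stick-breaking fractions are uniformly close to those producing \<open>c(x)\<close>, and that the
  first \<open>L\<close> atoms stay within \<open>r\<close> of \<open>\<xi>\<^sub>l\<close> has positive probability by independence and
  (i)--(v), and on it the random density is uniformly close to \<open>q\<close>. In the wDMBPP the weights are
  constants, so \<open>N\<close> equal weights \<open>1/N\<close> are used instead and the dependence on \<open>x\<close> is moved into
  the atoms: atom \<open>j\<close> follows a continuous path to \<open>\<xi>\<^sub>l\<close> whenever \<open>(j + 1/2)/N\<close> lies well inside
  the \<open>l\<close>-th interval of cumulative weights of \<open>c(x)\<close>, which reproduces \<open>c(x)\<close> up to \<open>O(L (\<delta> + 1/N))\<close>.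
\<close>

lemma mem_Dm: "y \<in> Dm \<longleftrightarrow> (\<forall>i. 0 \<le> y$i) \<and> (\<Sum>i\<in>UNIV. y$i) \<le> 1"
proof -
  have "y$i \<le> 1" if "\<forall>i. 0 \<le> y$i" "(\<Sum>i\<in>UNIV. y$i) \<le> 1" for i
    using that member_le_sum[of i UNIV "vec_nth y"] by auto
  then show ?thesis unfolding Dm_def by auto
qed

lemma closed_Dm: "closed (Dm :: (real^'m) set)"
proof -
  have "Dm = (\<Inter>i. {y::real^'m. 0 \<le> y$i}) \<inter> {y. (\<Sum>i\<in>UNIV. y$i) \<le> 1}"
    by (auto simp: mem_Dm)
  also have "closed \<dots>"
    by (intro closed_Int closed_INT ballI closed_Collect_le continuous_intros)
  finally show ?thesis .
qed

lemma Dm_borel[measurable]: "(Dm :: (real^'m) set) \<in> sets borel"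
  using closed_Dm by (rule borel_closed)

lemma Dm_subset_cbox: "(Dm :: (real^'m) set) \<subseteq> cbox 0 1"
  by (auto simp: Dm_def mem_box_cart)

lemma compact_Dm: "compact (Dm :: (real^'m) set)"
  using closed_Dm bounded_subset[OF bounded_cbox Dm_subset_cbox] by (simp add: compact_eq_bounded_closed)

lemma zero_in_Dm: "0 \<in> Dm"
  by (simp add: Dm_def)

lemma has_integral_Dm_abs_le:
  fixes f :: "real^'m \<Rightarrow> real"
  assumes I: "(f has_integral I) Dm" and bound: "\<And>y. y \<in> Dm \<Longrightarrow> \<bar>f y\<bar> \<le> e"
  shows "\<bar>I\<bar> \<le> e"
proof -
  have e: "e \<ge> 0" using bound[OF zero_in_Dm] by simp
  define g where "g = (\<lambda>y. if y \<in> Dm then f y else 0)"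
  have "(g has_integral I) Dm" using I by (rule has_integral_eq[rotated]) (simp add: g_def)
  then have "(g has_integral I) (cbox 0 1)"
    by (rule has_integral_on_superset) (auto simp: g_def Dm_subset_cbox)
  then have "norm I \<le> e * Henstock_Kurzweil_Integration.content (cbox (0::real^'m) 1)"
    by (rule has_integral_bound[OF e]) (auto simp: g_def bound e)
  moreover have "Henstock_Kurzweil_Integration.content (cbox (0::real^'m) 1) = 1"
    using Dm_subset_cbox zero_in_Dm by (subst content_cbox_cart) auto
  ultimately show ?thesis by simp
qed

lemma finite_nat_vec_bounded: "finite {a::nat^'m. \<forall>i. a$i \<le> n}"
proof -
  have "{a::nat^'m. \<forall>i. a$i \<le> n} \<subseteq> vec_lambda ` (PiE UNIV (\<lambda>_. {..n}))"
  proof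
    fix a :: "nat^'m" assume "a \<in> {a. \<forall>i. a$i \<le> n}"
    then have "vec_nth a \<in> PiE UNIV (\<lambda>_. {..n})" by auto
    moreover have "a = vec_lambda (vec_nth a)" by simp
    ultimately show "a \<in> vec_lambda ` (PiE UNIV (\<lambda>_. {..n}))" by blast
  qed
  moreover have "finite (vec_lambda ` (PiE UNIV (\<lambda>_::'m. {..n})))"
    by (intro finite_imageI finite_PiE) auto
  ultimately show ?thesis by (rule finite_subset)
qed

definition simplex_grid :: "'m set \<Rightarrow> nat \<Rightarrow> (nat^'m) set" where
  "simplex_grid A n = {a. (\<forall>i. i \<notin> A \<longrightarrow> a$i = 0) \<and> (\<Sum>i\<in>A. a$i) \<le> n}"

lemma finite_simplex_grid: "finite (simplex_grid (A::'m::finite set) n)"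
proof -
  have "simplex_grid A n \<subseteq> {a::nat^'m. \<forall>i. a$i \<le> n}"
  proof (safe)
    fix a i assume a: "a \<in> simplex_grid A n"
    show "a$i \<le> n"
    proof (cases "i \<in> A")
      case True
      then have "a$i \<le> (\<Sum>i\<in>A. a$i)" by (intro member_le_sum) auto
      then show ?thesis using a by (auto simp: simplex_grid_def)
    next
      case False then show ?thesis using a by (auto simp: simplex_grid_def)
    qed
  qed
  then show ?thesis using finite_nat_vec_bounded finite_subset by blast
qed

lemma zero_in_simplex_grid: "0 \<in> simplex_grid A n"
  by (simp add: simplex_grid_def)

definition vec_upd :: "nat^'m \<Rightarrow> 'm \<Rightarrow> nat \<Rightarrow> nat^'m" where
  "vec_upd a c j = (\<chi> i. if i = c then j else a$i)"

lemma vec_upd_nth[simp]: "vec_upd a c j $ i = (if i = c then j else a$i)"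
  by (simp add: vec_upd_def)

lemma sum_simplex_grid_insert:
  fixes F :: "nat^'m \<Rightarrow> 'b::comm_monoid_add"
  assumes "c \<notin> A"
  shows "(\<Sum>a\<in>simplex_grid (insert c A) n. F a) = (\<Sum>j\<le>n. \<Sum>a\<in>simplex_grid A (n-j). F (vec_upd a c j))"
proof -
  have fA: "finite A" by simp
  let ?S = "Sigma {..n} (\<lambda>j. simplex_grid A (n-j))"
  have bij: "bij_betw (\<lambda>(j,a). vec_upd a c j) ?S (simplex_grid (insert c A) n)"
  proof (rule bij_betwI[where g = "\<lambda>a. (a$c, vec_upd a c 0)"])
    show "(\<lambda>(j,a). vec_upd a c j) \<in> ?S \<rightarrow> simplex_grid (insert c A) n"
    proof
      fix p assume p: "p \<in> ?S"
      obtain j a where pj: "p = (j,a)" by force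
      with p have j: "j \<le> n" and a: "a \<in> simplex_grid A (n-j)" by auto
      have "(\<Sum>i\<in>insert c A. vec_upd a c j $ i) = j + (\<Sum>i\<in>A. vec_upd a c j $ i)"
        using assms fA by simp
      also have "(\<Sum>i\<in>A. vec_upd a c j $ i) = (\<Sum>i\<in>A. a $ i)"
        using assms by (intro sum.cong) auto
      finally show "(\<lambda>(j,a). vec_upd a c j) p \<in> simplex_grid (insert c A) n"
        using a j assms by (auto simp: simplex_grid_def pj)
    qed
    show "(\<lambda>a. (a$c, vec_upd a c 0)) \<in> simplex_grid (insert c A) n \<rightarrow> ?S"
    proof
      fix a assume a: "a \<in> simplex_grid (insert c A) n"
      have s: "(\<Sum>i\<in>insert c A. a $ i) = a$c + (\<Sum>i\<in>A. a $ i)"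
        using assms fA by simp
      have "(\<Sum>i\<in>A. vec_upd a c 0 $ i) = (\<Sum>i\<in>A. a $ i)"
        using assms by (intro sum.cong) auto
      then show "(\<lambda>a. (a$c, vec_upd a c 0)) a \<in> ?S"
        using a s by (auto simp: simplex_grid_def)
    qed
    show "(\<lambda>a. (a$c, vec_upd a c 0)) ((\<lambda>(j,a). vec_upd a c j) p) = p" if "p \<in> ?S" for p
    proof -
      obtain j a where pj: "p = (j,a)" by force
      with that have a: "a \<in> simplex_grid A (n-j)" by auto
      then have "a$c = 0" using assms by (auto simp: simplex_grid_def)
      then have "vec_upd (vec_upd a c j) c 0 = a"
        by (auto simp: vec_eq_iff)
      then show ?thesis by (simp add: pj)
    qed
    show "(\<lambda>(j,a). vec_upd a c j) ((\<lambda>a. (a$c, vec_upd a c 0)) a) = a" for a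
      by (auto simp: vec_eq_iff)
  qed
  have "(\<Sum>a\<in>simplex_grid (insert c A) n. F a) = (\<Sum>p\<in>?S. F ((\<lambda>(j,a). vec_upd a c j) p))"
    using sum.reindex_bij_betw[OF bij, of F] by simp
  also have "\<dots> = (\<Sum>j\<le>n. \<Sum>a\<in>simplex_grid A (n-j). F (vec_upd a c j))"
    using sum.Sigma[of "{..n}" "\<lambda>j. simplex_grid A (n-j)" "\<lambda>j a. F (vec_upd a c j)"]
    by (simp add: finite_simplex_grid split_beta)
  finally show ?thesis .
qed

definition multinom_coeff :: "'m set \<Rightarrow> nat \<Rightarrow> nat^'m \<Rightarrow> real" where
  "multinom_coeff A n a = fact n / ((\<Prod>i\<in>A. fact (a$i)) * fact (n - (\<Sum>i\<in>A. a$i)))"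

definition multinom_term :: "'m set \<Rightarrow> nat \<Rightarrow> real^'m \<Rightarrow> real \<Rightarrow> nat^'m \<Rightarrow> real" where
  "multinom_term A n x t a = multinom_coeff A n a * (\<Prod>i\<in>A. (x$i)^(a$i)) * t^(n - (\<Sum>i\<in>A. a$i))"

lemma multinom_term_insert:
  assumes "c \<notin> A" "j \<le> n" "a \<in> simplex_grid A (n-j)"
  shows "multinom_term (insert c A) n x t (vec_upd a c j) = real (n choose j) * (x$c)^j * multinom_term A (n-j) x t a"
proof -
  have fA: "finite A" by simp
  have s: "(\<Sum>i\<in>A. vec_upd a c j $ i) = (\<Sum>i\<in>A. a $ i)"
    using assms by (intro sum.cong) auto
  have p: "(\<Prod>i\<in>A. fact (vec_upd a c j $ i)) = (\<Prod>i\<in>A. fact (a $ i) :: real)"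
    using assms by (intro prod.cong) auto
  have p2: "(\<Prod>i\<in>A. (x$i) ^ (vec_upd a c j $ i)) = (\<Prod>i\<in>A. (x$i) ^ (a $ i))"
    using assms by (intro prod.cong) auto
  have e: "n - (j + (\<Sum>i\<in>A. a $ i)) = n - j - (\<Sum>i\<in>A. a $ i)" by simp
  have ch: "real (n choose j) = fact n / (fact j * fact (n-j))"
    using assms(2) by (simp add: binomial_fact)
  have S1: "(\<Sum>i\<in>insert c A. vec_upd a c j $ i) = j + (\<Sum>i\<in>A. a $ i)"
    using assms fA s by simp
  have P1: "(\<Prod>i\<in>insert c A. fact (vec_upd a c j $ i)) = fact j * (\<Prod>i\<in>A. fact (a $ i) :: real)"
    using assms fA p by simp
  have P2: "(\<Prod>i\<in>insert c A. (x$i) ^ (vec_upd a c j $ i)) = (x$c)^j * (\<Prod>i\<in>A. (x$i) ^ (a $ i))"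
    using assms fA p2 by simp
  define F where "F = (\<Prod>i\<in>A. fact (a $ i) :: real)"
  define G where "G = (fact (n - j - (\<Sum>i\<in>A. a $ i)) :: real)"
  have Fp: "F > 0" unfolding F_def by (intro prod_pos) auto
  have Gp: "G > 0" unfolding G_def by simp
  have C: "multinom_coeff (insert c A) n (vec_upd a c j) = real (n choose j) * multinom_coeff A (n-j) a"
    unfolding multinom_coeff_def S1 P1 e ch F_def[symmetric] G_def[symmetric]
    using Fp Gp by (simp add: field_simps)
  show ?thesis
    unfolding multinom_term_def C P2 S1 e by (simp add: ac_simps)
qed

lemma multinom_expansion:
  fixes x :: "real^'m"
  shows "(\<Sum>a\<in>simplex_grid A n. multinom_term A n x t a) = ((\<Sum>i\<in>A. x$i) + t)^n"
proof -
  have "finite A" by simp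
  then show ?thesis
  proof (induction A arbitrary: n rule: finite_induct)
    case empty
    have g: "simplex_grid {} n = {0}" by (auto simp: simplex_grid_def vec_eq_iff)
    show ?case by (simp add: g multinom_term_def multinom_coeff_def)
  next
    case (insert c A)
    have "(\<Sum>a\<in>simplex_grid (insert c A) n. multinom_term (insert c A) n x t a)
        = (\<Sum>j\<le>n. \<Sum>a\<in>simplex_grid A (n-j). multinom_term (insert c A) n x t (vec_upd a c j))"
      by (rule sum_simplex_grid_insert) fact
    also have "\<dots> = (\<Sum>j\<le>n. real (n choose j) * (x$c)^j * (\<Sum>a\<in>simplex_grid A (n-j). multinom_term A (n-j) x t a))"
      by (intro sum.cong refl) (simp add: multinom_term_insert insert.hyps sum_distrib_left)
    also have "\<dots> = (\<Sum>j\<le>n. real (n choose j) * (x$c)^j * ((\<Sum>i\<in>A. x$i) + t)^(n-j))"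
      by (simp add: insert.IH)
    also have "\<dots> = (x$c + ((\<Sum>i\<in>A. x$i) + t))^n"
      by (simp add: binomial_ring)
    finally show ?case using insert.hyps by (simp add: add.assoc)
  qed
qed

lemma sum_simplex_grid_marginal:
  fixes \<phi> :: "nat \<Rightarrow> real" and y :: "real^'m"
  shows "(\<Sum>a\<in>simplex_grid UNIV n. multinom_term UNIV n y t a * \<phi> (a$i))
       = (\<Sum>j\<le>n. real (n choose j) * (y$i)^j * \<phi> j * ((\<Sum>k\<in>UNIV-{i}. y$k) + t)^(n-j))"
proof -
  have U: "(UNIV::'m set) = insert i (UNIV - {i})" by auto
  have "(\<Sum>a\<in>simplex_grid UNIV n. multinom_term UNIV n y t a * \<phi> (a$i))
      = (\<Sum>a\<in>simplex_grid (insert i (UNIV - {i})) n. multinom_term (insert i (UNIV - {i})) n y t a * \<phi> (a$i))"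
    by (simp only: U[symmetric])
  also have "\<dots> = (\<Sum>j\<le>n. \<Sum>a\<in>simplex_grid (UNIV-{i}) (n-j). multinom_term (insert i (UNIV - {i})) n y t (vec_upd a i j) * \<phi> j)"
    by (subst sum_simplex_grid_insert) auto
  also have "\<dots> = (\<Sum>j\<le>n. real (n choose j) * (y$i)^j * \<phi> j * (\<Sum>a\<in>simplex_grid (UNIV-{i}) (n-j). multinom_term (UNIV-{i}) (n-j) y t a))"
  proof (intro sum.cong refl)
    fix j assume j: "j \<in> {..n}"
    have mi: "multinom_term UNIV n y t (vec_upd a i j) = real (n choose j) * (y$i)^j * multinom_term (UNIV-{i}) (n-j) y t a"
      if "a \<in> simplex_grid (UNIV-{i}) (n-j)" for a
      using multinom_term_insert[of i "UNIV-{i}" j n a y t] that j U by auto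
    show "(\<Sum>a\<in>simplex_grid (UNIV-{i}) (n-j). multinom_term (insert i (UNIV - {i})) n y t (vec_upd a i j) * \<phi> j) =
        real (n choose j) * (y$i)^j * \<phi> j * (\<Sum>a\<in>simplex_grid (UNIV-{i}) (n-j). multinom_term (UNIV-{i}) (n-j) y t a)"
      by (simp add: U[symmetric] mi sum_distrib_left sum_distrib_right ac_simps cong: sum.cong)
  qed
  also have "\<dots> = (\<Sum>j\<le>n. real (n choose j) * (y$i)^j * \<phi> j * ((\<Sum>k\<in>UNIV-{i}. y$k) + t)^(n-j))"
    by (simp add: multinom_expansion)
  finally show ?thesis .
qed

section \<open>Bernstein polynomials on the simplex\<close>

definition bernstein_simplex :: "nat \<Rightarrow> real^'m \<Rightarrow> nat^'m \<Rightarrow> real" where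
  "bernstein_simplex n y a = multinom_term UNIV n y (1 - (\<Sum>i\<in>UNIV. y$i)) a"

lemma sum_bernstein_simplex: "(\<Sum>a\<in>simplex_grid UNIV n. bernstein_simplex n y a) = 1"
  unfolding bernstein_simplex_def by (simp add: multinom_expansion)

lemma bernstein_simplex_marginal:
  fixes y :: "real^'m"
  shows "(\<Sum>a\<in>simplex_grid UNIV n. bernstein_simplex n y a * \<phi> (a$i)) = (\<Sum>j\<le>n. Bernstein n j (y$i) * \<phi> j)"
proof -
  have e: "(\<Sum>k\<in>UNIV-{i}. y$k) + (1 - (\<Sum>i\<in>UNIV. y$i)) = 1 - y$i"
    using sum.remove[of UNIV i "\<lambda>k. y$k"] by simp
  show ?thesis
    unfolding bernstein_simplex_def sum_simplex_grid_marginal e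
    by (intro sum.cong refl) (simp add: Bernstein_def ac_simps)
qed

lemma Bernstein_variance:
  assumes "n \<ge> 1"
  shows "(\<Sum>j\<le>n. Bernstein n j x * (real j / real n - x)^2) = x * (1 - x) / real n"
proof -
  have "(\<Sum>j\<le>n. Bernstein n j x * (real j / real n - x)^2)
     = (\<Sum>j\<le>n. (real j * (real j - 1) * Bernstein n j x) / (real n)^2
          + (real j * Bernstein n j x) * (1 / (real n)^2 - 2 * x / real n) + x^2 * Bernstein n j x)"
    using assms by (intro sum.cong refl) (simp add: field_simps power2_eq_square)
  also have "\<dots> = real n * (real n - 1) * x^2 / (real n)^2 + real n * x * (1 / (real n)^2 - 2 * x / real n) + x^2"
    by (simp add: sum.distrib sum_divide_distrib[symmetric] sum_distrib_right[symmetric] sum_distrib_left[symmetric])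
  also have "\<dots> = x * (1 - x) / real n"
    using assms by (simp add: field_simps power2_eq_square)
  finally show ?thesis .
qed

lemma bernstein_simplex_nonneg: "y \<in> Dm \<Longrightarrow> bernstein_simplex n y a \<ge> 0"
  unfolding bernstein_simplex_def multinom_term_def multinom_coeff_def
  by (auto simp: mem_Dm intro!: mult_nonneg_nonneg prod_nonneg zero_le_power divide_nonneg_nonneg)

lemma bernstein_simplex_le_1: "y \<in> Dm \<Longrightarrow> a \<in> simplex_grid UNIV n \<Longrightarrow> bernstein_simplex n y a \<le> 1"
proof -
  assume y: "y \<in> Dm" and a: "a \<in> simplex_grid UNIV n"
  have "bernstein_simplex n y a \<le> (\<Sum>a\<in>simplex_grid UNIV n. bernstein_simplex n y a)"
    using y a by (intro member_le_sum bernstein_simplex_nonneg finite_simplex_grid)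
  then show ?thesis by (simp add: sum_bernstein_simplex)
qed

definition grid_point :: "nat \<Rightarrow> nat^'m \<Rightarrow> real^'m" where
  "grid_point n a = (\<chi> i. real (a$i) / real n)"

lemma grid_point_Dm:
  assumes a: "a \<in> simplex_grid UNIV n" and n: "n \<ge> 1"
  shows "grid_point n a \<in> Dm"
proof -
  have "(\<Sum>i\<in>UNIV. grid_point n a $ i) = real (sum (vec_nth a) UNIV) / real n"
    by (simp add: grid_point_def sum_divide_distrib)
  also have "\<dots> \<le> 1"
  proof -
    have "sum (vec_nth a) UNIV \<le> n" using a by (simp add: simplex_grid_def)
    then have "real (sum (vec_nth a) UNIV) \<le> real n" by (simp only: of_nat_le_iff)
    then show ?thesis using n by simp
  qed
  finally show ?thesis unfolding mem_Dm by (simp add: grid_point_def)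
qed

lemma dist_vec_squared: "(dist (x::real^'m) y)^2 = (\<Sum>i\<in>UNIV. (x$i - y$i)^2)"
  unfolding dist_vec_def L2_set_def dist_real_def
  by (simp add: sum_nonneg)

lemma bernstein_simplex_variance_le:
  fixes y :: "real^'m"
  assumes y: "y \<in> Dm" and n: "n \<ge> 1"
  shows "(\<Sum>a\<in>simplex_grid UNIV n. bernstein_simplex n y a * (dist (grid_point n a) y)^2) \<le> real CARD('m) / real n"
proof -
  have "(\<Sum>a\<in>simplex_grid UNIV n. bernstein_simplex n y a * (dist (grid_point n a) y)^2)
      = (\<Sum>i\<in>UNIV. \<Sum>a\<in>simplex_grid UNIV n. bernstein_simplex n y a * (real (a$i) / real n - y$i)^2)"
    unfolding dist_vec_squared by (simp add: sum_distrib_left grid_point_def sum.swap[of _ UNIV])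
  also have "\<dots> = (\<Sum>i\<in>UNIV. y$i * (1 - y$i) / real n)"
    by (intro sum.cong refl) (simp add: bernstein_simplex_marginal[where \<phi>="\<lambda>j. (real j / real _ - _)^2"] Bernstein_variance[OF n])
  also have "\<dots> \<le> (\<Sum>i\<in>(UNIV::'m set). 1 / real n)"
  proof (rule sum_mono)
    fix i
    have "0 \<le> y$i" "y$i \<le> 1" using y by (auto simp: Dm_def)
    then have "y$i * (1 - y$i) \<le> 1" by (intro mult_le_one) auto
    then show "y$i * (1 - y$i) / real n \<le> 1 / real n" by (rule divide_right_mono) simp
  qed
  also have "\<dots> = real CARD('m) / real n" by simp
  finally show ?thesis .
qed

lemma bernstein_simplex_approx:
  fixes f :: "real^'m \<Rightarrow> real" and y :: "real^'m"
  assumes M: "\<And>y. y \<in> Dm \<Longrightarrow> \<bar>f y\<bar> \<le> M"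
    and uc: "\<And>y y'. y \<in> Dm \<Longrightarrow> y' \<in> Dm \<Longrightarrow> dist y y' < \<delta> \<Longrightarrow> \<bar>f y - f y'\<bar> \<le> \<eta>"
    and \<delta>: "\<delta> > 0" and \<eta>: "\<eta> \<ge> 0" and n: "n \<ge> 1" and y: "y \<in> Dm"
  shows "\<bar>(\<Sum>a\<in>simplex_grid UNIV n. f (grid_point n a) * bernstein_simplex n y a) - f y\<bar>
           \<le> \<eta> + 2 * M * real CARD('m) / (real n * \<delta>^2)"
proof -
  let ?G = "simplex_grid UNIV n" and ?P = "\<lambda>a. bernstein_simplex n y a" and ?d = "\<lambda>a. dist (grid_point n a) y"
  have "M \<ge> 0" using M[OF y] by simp
  have pointwise: "\<bar>f (grid_point n a) - f y\<bar> \<le> \<eta> + 2 * M / \<delta>^2 * (?d a)^2" if a: "a \<in> ?G" for a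
  proof (cases "?d a < \<delta>")
    case True
    then have "\<bar>f (grid_point n a) - f y\<bar> \<le> \<eta>" using uc[OF grid_point_Dm[OF a n] y] by simp
    moreover have "0 \<le> 2 * M / \<delta>^2 * (?d a)^2" using \<open>M \<ge> 0\<close> by simp
    ultimately show ?thesis by linarith
  next
    case False
    then have "1 \<le> (?d a)^2 / \<delta>^2" using \<delta> by (simp add: power_mono)
    then have "2 * M * 1 \<le> 2 * M * ((?d a)^2 / \<delta>^2)" using \<open>M \<ge> 0\<close> by (intro mult_left_mono) auto
    moreover have "\<bar>f (grid_point n a) - f y\<bar> \<le> 2 * M" using M[OF grid_point_Dm[OF a n]] M[OF y] by linarith
    ultimately show ?thesis using \<eta> by simp
  qed
  have "(\<Sum>a\<in>?G. f (grid_point n a) * ?P a) - f y = (\<Sum>a\<in>?G. (f (grid_point n a) - f y) * ?P a)"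
    by (simp add: left_diff_distrib sum_subtractf sum_distrib_left[symmetric] sum_bernstein_simplex)
  then have "\<bar>(\<Sum>a\<in>?G. f (grid_point n a) * ?P a) - f y\<bar> \<le> (\<Sum>a\<in>?G. \<bar>f (grid_point n a) - f y\<bar> * ?P a)"
    using bernstein_simplex_nonneg[OF y] by (auto intro: order_trans[OF sum_abs] simp: abs_mult)
  also have "\<dots> \<le> (\<Sum>a\<in>?G. (\<eta> + 2 * M / \<delta>^2 * (?d a)^2) * ?P a)"
    using bernstein_simplex_nonneg[OF y] pointwise by (intro sum_mono mult_right_mono) auto
  also have "\<dots> = \<eta> * (\<Sum>a\<in>?G. ?P a) + 2 * M / \<delta>^2 * (\<Sum>a\<in>?G. ?P a * (?d a)^2)"
    by (simp add: algebra_simps sum.distrib sum_distrib_left)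
  also have "\<dots> \<le> \<eta> + 2 * M / \<delta>^2 * (real CARD('m) / real n)"
  proof -
    have "2 * M / \<delta>^2 * (\<Sum>a\<in>?G. ?P a * (?d a)^2) \<le> 2 * M / \<delta>^2 * (real CARD('m) / real n)"
      using bernstein_simplex_variance_le[OF y n] \<open>M \<ge> 0\<close> by (intro mult_left_mono) auto
    then show ?thesis by (simp add: sum_bernstein_simplex)
  qed
  finally show ?thesis by (simp add: mult.commute)
qed

section \<open>Dirichlet integrals\<close>

lemma has_integral_beta_nat:
  fixes t :: real
  assumes "t \<ge> 0"
  shows "((\<lambda>u. u^p * (t-u)^q) has_integral (t^(p+q+1) * fact p * fact q / fact (p+q+1))) {0..t}"
  using assms
proof (induction q arbitrary: p)
  case 0
  have "((\<lambda>u. u^(p+1) / real (p+1)) has_real_derivative u^p) (at u within {0..t})" for u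
    by (rule derivative_eq_intros refl | simp)+
  then have "((\<lambda>u. u^p) has_integral (t^(p+1) / (p+1) - 0^(p+1) / (p+1))) {0..t}"
    by (intro fundamental_theorem_of_calculus 0) (simp add: has_real_derivative_iff_has_vector_derivative)
  then show ?case by simp
next
  case (Suc q)
  have "((\<lambda>u. t * (u^p * (t-u)^q) - u^(p+1) * (t-u)^q) has_integral
     (t * (t^(p+q+1) * fact p * fact q / fact (p+q+1)) - t^(p+1+q+1) * fact (p+1) * fact q / fact (p+1+q+1))) {0..t}"
    by (intro has_integral_diff has_integral_mult_right Suc.IH Suc.prems)
  moreover have "t * (u^p * (t-u)^q) - u^(p+1) * (t-u)^q = u^p * (t-u)^Suc q" for u
    by (simp add: algebra_simps)
  moreover have "t * (t^(p+q+1) * fact p * fact q / fact (p+q+1)) - t^(p+1+q+1) * fact (p+1) * fact q / fact (p+1+q+1)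
     = t^(p + Suc q + 1) * fact p * fact (Suc q) / fact (p + Suc q + 1)"
  proof -
    have cancel: "T * A * B / F - T * (P * A) * B / ((P + Q) * F) = T * A * (Q * B) / ((P + Q) * F)"
      if "F > 0" "P + Q > 0" for T A B F P Q :: real
      using that by (simp add: divide_simps) (simp add: algebra_simps)
    have "fact (p + Suc q + 1) = (real (p+1) + real (q+1)) * (fact (p+q+1) :: real)"
      "fact (p+1+q+1) = (real (p+1) + real (q+1)) * (fact (p+q+1) :: real)"
      "t * t^(p+q+1) = t^(p+q+2)" "t^(p+1+q+1) = t^(p+q+2)" "t^(p + Suc q + 1) = t^(p+q+2)"
      by (simp_all add: algebra_simps)
    with cancel[of "fact (p+q+1)" "real (p+1)" "real (q+1)" "t^(p+q+2)" "fact p" "fact q"] show ?thesis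
      by (simp only: mult.assoc fact_Suc of_nat_Suc) simp
  qed
  ultimately show ?case by simp
qed

text \<open>The Dirichlet integrand on the scaled simplex \<open>{x \<in> \<real>\<^sup>A. x \<ge> 0, \<Sum>x \<le> t}\<close>, stated on the product
  space so that it can be integrated one coordinate at a time.\<close>

definition dirichlet_kernel :: "'i set \<Rightarrow> ('i \<Rightarrow> nat) \<Rightarrow> nat \<Rightarrow> real \<Rightarrow> ('i \<Rightarrow> real) \<Rightarrow> real" where
  "dirichlet_kernel A a b t x =
     (if (\<forall>i\<in>A. 0 \<le> x i) \<and> sum x A \<le> t then (\<Prod>i\<in>A. (x i)^(a i)) * (t - sum x A)^b else 0)"

lemma dirichlet_kernel_measurable[measurable]:
  "finite A \<Longrightarrow> dirichlet_kernel A a b t \<in> borel_measurable (Pi\<^sub>M A (\<lambda>_. lborel))"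
  unfolding dirichlet_kernel_def by measurable

lemma dirichlet_kernel_insert:
  assumes "finite A" "c \<notin> A"
  shows "dirichlet_kernel (insert c A) a b t (x(c := y))
       = indicator {0..t} y * y^(a c) * dirichlet_kernel A a b (t - y) x"
proof -
  have "(\<Sum>i\<in>A. (x(c := y)) i) = sum x A" "(\<Prod>i\<in>A. (x(c := y)) i ^ a i) = (\<Prod>i\<in>A. x i ^ a i)"
    using assms by (auto intro!: sum.cong prod.cong)
  moreover have "sum x A \<ge> 0" if "\<forall>i\<in>A. 0 \<le> x i" using that by (intro sum_nonneg) auto
  ultimately show ?thesis
    using assms by (auto simp: dirichlet_kernel_def indicator_def algebra_simps)
qed

lemma nn_integral_dirichlet_kernel:
  fixes A :: "'i set" and a :: "'i \<Rightarrow> nat"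
  assumes "finite A" "t \<ge> 0"
  shows "(\<integral>\<^sup>+ x. ennreal (dirichlet_kernel A a b t x) \<partial>Pi\<^sub>M A (\<lambda>_. lborel))
        = ennreal (t^(sum a A + b + card A) * (\<Prod>i\<in>A. fact (a i)) * fact b / fact (sum a A + b + card A))"
  using assms
proof (induction A arbitrary: t rule: finite_induct)
  case empty
  interpret product_sigma_finite "\<lambda>_. lborel" by standard
  show ?case using empty by (subst nn_integral_empty) (auto simp: dirichlet_kernel_def)
next
  case (insert c A t)
  interpret product_sigma_finite "\<lambda>_. lborel" by standard
  define N where "N = sum a A + b + card A"
  define C where "C = (\<Prod>i\<in>A. fact (a i)) * fact b / (fact N :: real)"
  have "C \<ge> 0" unfolding C_def by (auto intro!: divide_nonneg_nonneg mult_nonneg_nonneg prod_nonneg)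
  have "(\<integral>\<^sup>+ x. ennreal (dirichlet_kernel (insert c A) a b t x) \<partial>Pi\<^sub>M (insert c A) (\<lambda>_. lborel))
      = (\<integral>\<^sup>+ y. \<integral>\<^sup>+ x. ennreal (indicator {0..t} y * y^(a c)) * ennreal (dirichlet_kernel A a b (t - y) x)
           \<partial>Pi\<^sub>M A (\<lambda>_. lborel) \<partial>lborel)"
    using insert.hyps
    by (subst product_nn_integral_insert_rev)
       (auto simp: dirichlet_kernel_insert indicator_def ennreal_mult'[symmetric] intro!: nn_integral_cong)
  also have "\<dots> = (\<integral>\<^sup>+ y. ennreal (indicator {0..t} y * y^(a c)) *
           (\<integral>\<^sup>+ x. ennreal (dirichlet_kernel A a b (t - y) x) \<partial>Pi\<^sub>M A (\<lambda>_. lborel)) \<partial>lborel)"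
    using insert.hyps by (intro nn_integral_cong nn_integral_cmult) auto
  also have "\<dots> = (\<integral>\<^sup>+ y. ennreal (y^(a c) * (t-y)^N * C) * indicator {0..t} y \<partial>lborel)"
    using \<open>C \<ge> 0\<close>
    by (intro nn_integral_cong)
       (auto simp: insert.IH N_def C_def indicator_def ennreal_mult'[symmetric] mult.assoc)
  also have "\<dots> = ennreal (t^(a c + N + 1) * fact (a c) * fact N / fact (a c + N + 1) * C)"
    using \<open>C \<ge> 0\<close> insert.prems
    by (intro nn_integral_has_integral_lebesgue' has_integral_mult_left has_integral_beta_nat) auto
  also have "a c + N + 1 = sum a (insert c A) + b + card (insert c A)"
    using insert.hyps by (simp add: N_def)
  finally show ?case
    using insert.hyps by (simp add: C_def field_simps)
qed

lemma sum_Basis_vec: "(\<Sum>v\<in>(Basis :: (real^'m) set). g v) = (\<Sum>i\<in>UNIV. g (axis i 1))"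
  by (simp add: Basis_vec_def UNION_singleton_eq_range sum.reindex axis_eq_axis inj_on_def)

lemma prod_Basis_vec: "(\<Prod>v\<in>(Basis :: (real^'m) set). g v) = (\<Prod>i\<in>UNIV. g (axis i 1))"
  by (simp add: Basis_vec_def UNION_singleton_eq_range prod.reindex axis_eq_axis inj_on_def)

lemma sum_Basis_scaleR_nth: "(\<Sum>v\<in>Basis. f v *\<^sub>R v :: real^'m) $ i = f (axis i 1)"
  by (simp add: sum_component sum_Basis_vec axis_def if_distrib cong: if_cong)

definition simplex_monomial :: "nat^'m \<Rightarrow> nat \<Rightarrow> real^'m \<Rightarrow> real" where
  "simplex_monomial a b y = (\<Prod>i\<in>UNIV. (y$i)^(a$i)) * (1 - (\<Sum>i\<in>UNIV. y$i))^b"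

lemma simplex_monomial_Basis_coordinates:
  fixes f :: "real^'m \<Rightarrow> real"
  defines "y \<equiv> \<Sum>v\<in>Basis. f v *\<^sub>R v"
  shows "indicator Dm y * simplex_monomial a b y = dirichlet_kernel Basis (\<lambda>v. a $ axis_index v) b 1 f"
proof -
  have nth: "y $ i = f (axis i 1)" for i
    unfolding y_def by (rule sum_Basis_scaleR_nth)
  have "(\<forall>v\<in>(Basis::(real^'m) set). 0 \<le> f v) \<longleftrightarrow> (\<forall>i. 0 \<le> y $ i)"
    unfolding nth by (auto simp: Basis_vec_def)
  moreover have "sum f (Basis::(real^'m) set) = (\<Sum>i\<in>UNIV. y $ i)"
    unfolding nth sum_Basis_vec ..
  moreover have "(\<Prod>v\<in>(Basis::(real^'m) set). f v ^ a $ axis_index v) = (\<Prod>i\<in>UNIV. (y $ i) ^ (a$i))"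
    unfolding nth prod_Basis_vec by simp
  ultimately show ?thesis
    unfolding dirichlet_kernel_def simplex_monomial_def by (simp add: mem_Dm indicator_def)
qed

lemma has_integral_simplex_monomial:
  fixes a :: "nat^'m"
  shows "(simplex_monomial a b has_integral
           ((\<Prod>i\<in>UNIV. fact (a$i)) * fact b / fact (sum (vec_nth a) UNIV + b + CARD('m)))) Dm"
proof -
  define r :: real where "r = (\<Prod>i\<in>UNIV. fact (a$i)) * fact b / fact (sum (vec_nth a) UNIV + b + CARD('m))"
  define g where "g = (\<lambda>y. indicator Dm y * simplex_monomial a b y)"
  have g_meas: "g \<in> borel_measurable borel"
    unfolding g_def simplex_monomial_def by measurable
  have "(\<integral>\<^sup>+ y. ennreal (g y) \<partial>lborel)
      = (\<integral>\<^sup>+ f. ennreal (g (\<Sum>v\<in>Basis. f v *\<^sub>R v)) \<partial>Pi\<^sub>M Basis (\<lambda>_. lborel))"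
    using g_meas by (subst lborel_eq) (simp add: nn_integral_distr)
  also have "\<dots> = (\<integral>\<^sup>+ f. ennreal (dirichlet_kernel (Basis :: (real^'m) set) (\<lambda>v. a $ axis_index v) b 1 f)
                      \<partial>Pi\<^sub>M Basis (\<lambda>_. lborel))"
    by (simp add: g_def simplex_monomial_Basis_coordinates)
  also have "\<dots> = ennreal r"
    by (subst nn_integral_dirichlet_kernel) (auto simp: r_def sum_Basis_vec prod_Basis_vec DIM_cart)
  finally have "(g has_integral r) UNIV"
    using g_meas
    by (intro nn_integral_has_integral)
       (auto simp: g_def r_def simplex_monomial_def indicator_def mem_Dm
             intro!: divide_nonneg_nonneg mult_nonneg_nonneg prod_nonneg)
  moreover have "g = (\<lambda>y. if y \<in> Dm then simplex_monomial a b y else 0)"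
    by (auto simp: g_def indicator_def)
  ultimately show ?thesis
    unfolding r_def[symmetric] by (simp add: has_integral_restrict_UNIV)
qed

lemma has_integral_bernstein_simplex:
  fixes a :: "nat^'m"
  assumes a: "a \<in> simplex_grid UNIV n"
  shows "((\<lambda>y. bernstein_simplex n y a) has_integral (fact n / fact (n + CARD('m)))) Dm"
proof -
  define b where "b = n - sum (vec_nth a) UNIV"
  have sle: "sum (vec_nth a) UNIV \<le> n" using a by (simp add: simplex_grid_def)
  have e: "sum (vec_nth a) UNIV + b + CARD('m) = n + CARD('m)" using sle by (simp add: b_def)
  have P: "bernstein_simplex n y a = multinom_coeff UNIV n a * simplex_monomial a b y" for y
    by (simp add: bernstein_simplex_def multinom_term_def simplex_monomial_def b_def)
  have "((\<lambda>y. multinom_coeff UNIV n a * simplex_monomial a b y) has_integral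
      (multinom_coeff UNIV n a * ((\<Prod>i\<in>UNIV. fact (a$i)) * fact b / fact (n + CARD('m))))) Dm"
    using has_integral_simplex_monomial[of a b] unfolding e by (rule has_integral_mult_right)
  moreover have "multinom_coeff UNIV n a * ((\<Prod>i\<in>UNIV. fact (a$i)) * fact b / fact (n + CARD('m))) = fact n / fact (n + CARD('m))"
  proof -
    have "(\<Prod>i\<in>UNIV. fact (a$i) :: real) > 0" by (intro prod_pos) auto
    then show ?thesis by (simp add: multinom_coeff_def b_def)
  qed
  ultimately show ?thesis by (simp add: P)
qed

lemma Gamma_Suc_fact: "Gamma (real (Suc j)) = fact j"
  using Gamma_fact[of j, where 'a=real] by (simp add: add.commute)

lemma dir_dens_eq_bernstein_simplex:
  fixes a :: "nat^'m" and y :: "real^'m"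
  assumes a: "a \<in> simplex_grid UNIV n"
  shows "dir_dens (\<chi> i. a$i + 1) (n + 1 - sum (vec_nth a) UNIV) y = (fact (n + CARD('m)) / fact n) * bernstein_simplex n y a"
proof -
  define s where "s = sum (vec_nth a) UNIV"
  have sle: "s \<le> n" using a by (auto simp: simplex_grid_def s_def)
  have S1: "(\<Sum>i\<in>UNIV. (\<chi> i. a$i + 1) $ i) + (n + 1 - s) = Suc (n + CARD('m))"
    using sle by (simp add: sum_Suc s_def)
  have G1: "Gamma (real ((\<Sum>i\<in>UNIV. (\<chi> i. a$i + 1) $ i) + (n + 1 - s))) = fact (n + CARD('m))"
    unfolding S1 by (rule Gamma_Suc_fact)
  have G2: "(\<Prod>i\<in>UNIV. Gamma (real ((\<chi> i. a$i + 1) $ i))) = (\<Prod>i\<in>UNIV. fact (a$i))"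
    by (intro prod.cong refl) (simp add: Gamma_Suc_fact[symmetric])
  have G3: "Gamma (real (n + 1 - s)) = fact (n - s)"
    using sle Gamma_Suc_fact[of "n - s"] by (simp add: Suc_diff_le)
  have E1: "(\<Prod>i\<in>UNIV. (y$i) ^ ((\<chi> i. a$i + 1) $ i - 1)) = (\<Prod>i\<in>UNIV. (y$i) ^ (a$i))"
    by simp
  have E2: "n + 1 - s - 1 = n - s" by simp
  have Fp: "(\<Prod>i\<in>UNIV. fact (a$i) :: real) > 0" by (intro prod_pos) auto
  show ?thesis
    unfolding dir_dens_def G1 G2 G3 E1 E2 bernstein_simplex_def multinom_term_def multinom_coeff_def s_def[symmetric]
    using Fp by (simp add: field_simps)
qed

lemma bern_dens_cong: "ceil_vec k \<theta> = ceil_vec k \<theta>' \<Longrightarrow> bern_dens k \<theta> = bern_dens k \<theta>'"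
  unfolding bern_dens_def by (simp add: fun_eq_iff)

lemma bern_dens_eq_bernstein_simplex:
  fixes a :: "nat^'m"
  assumes a: "a \<in> simplex_grid UNIV n" and c: "ceil_vec (Suc n) \<theta> = (\<chi> i. a$i + 1)"
  shows "bern_dens (Suc n) \<theta> y = (fact (n + CARD('m)) / fact n) * bernstein_simplex n y a"
proof -
  have "Suc n + CARD('m) - (\<Sum>i\<in>UNIV. ceil_vec (Suc n) \<theta> $ i) = n + 1 - sum (vec_nth a) UNIV"
    unfolding c by (simp add: sum_Suc)
  then show ?thesis unfolding bern_dens_def
    using dir_dens_eq_bernstein_simplex[OF a, of y] c by simp
qed

lemma ceil_vec_Dm0_eq_Suc_grid:
  fixes \<theta> :: "real^'m"
  assumes t: "\<theta> \<in> Dm0" and k: "k \<ge> 1"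
  shows "\<exists>a\<in>simplex_grid UNIV (k - 1). ceil_vec k \<theta> = (\<chi> i. a$i + 1)"
proof -
  define c where "c = ceil_vec k \<theta>"
  have pos: "\<theta>$i > 0" for i using t by (auto simp: Dm0_def)
  have c1: "c$i \<ge> 1" for i
  proof -
    have "real k * \<theta>$i > 0" using pos[of i] k by simp
    then have "\<lceil>real k * \<theta>$i\<rceil> \<ge> 1" by (simp add: one_le_ceiling)
    then show ?thesis unfolding c_def ceil_vec_def by (simp add: le_nat_iff)
  qed
  have creal: "real (c$i) < real k * \<theta>$i + 1" for i
  proof -
    have "real k * \<theta>$i > 0" using pos[of i] k by simp
    then have "real (c$i) = real_of_int \<lceil>real k * \<theta>$i\<rceil>" unfolding c_def ceil_vec_def
      by simp
    also have "\<dots> < real k * \<theta>$i + 1" by linarith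
    finally show ?thesis .
  qed
  have "real (\<Sum>i\<in>UNIV. c$i) < real k * (\<Sum>i\<in>UNIV. \<theta>$i) + real CARD('m)"
  proof -
    have "real (\<Sum>i\<in>UNIV. c$i) = (\<Sum>i\<in>UNIV. real (c$i))" by simp
    also have "\<dots> < (\<Sum>i\<in>UNIV. real k * \<theta>$i + 1)"
      by (intro sum_strict_mono creal) auto
    also have "\<dots> = real k * (\<Sum>i\<in>UNIV. \<theta>$i) + real CARD('m)"
      by (simp add: sum.distrib sum_distrib_left)
    finally show ?thesis .
  qed
  also have "\<dots> \<le> real k + real CARD('m)"
    using t k by (auto simp: Dm0_def Dm_def)
  finally have sc: "(\<Sum>i\<in>UNIV. c$i) < k + CARD('m)" by linarith
  define a where "a = (\<chi> i. c$i - 1)"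
  have "c$i - 1 + 1 = c$i" for i using c1[of i] by simp
  then have ca: "c = (\<chi> i. a$i + 1)" by (simp add: a_def vec_eq_iff)
  have "(\<Sum>i\<in>UNIV. c$i) = sum (vec_nth a) UNIV + CARD('m)"
    unfolding ca by (simp add: sum_Suc)
  then have "sum (vec_nth a) UNIV \<le> k - 1" using sc by simp
  then have "a \<in> simplex_grid UNIV (k-1)" by (simp add: simplex_grid_def)
  then show ?thesis using ca unfolding c_def by blast
qed

lemma bern_dens_bounded:
  fixes \<theta> y :: "real^'m"
  assumes \<theta>: "\<theta> \<in> Dm0" and y: "y \<in> Dm"
  shows "0 \<le> bern_dens (Suc n) \<theta> y" and "bern_dens (Suc n) \<theta> y \<le> fact (n + CARD('m)) / fact n"
proof -
  obtain a where a: "a \<in> simplex_grid UNIV n" and c: "ceil_vec (Suc n) \<theta> = (\<chi> i. a$i + 1)"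
    using ceil_vec_Dm0_eq_Suc_grid[OF \<theta>, of "Suc n"] by auto
  show "0 \<le> bern_dens (Suc n) \<theta> y"
    unfolding bern_dens_eq_bernstein_simplex[OF a c] using bernstein_simplex_nonneg[OF y] by simp
  show "bern_dens (Suc n) \<theta> y \<le> fact (n + CARD('m)) / fact n"
    unfolding bern_dens_eq_bernstein_simplex[OF a c]
    using bernstein_simplex_le_1[OF y a] by (intro mult_right_le_one_le) (auto simp: bernstein_simplex_nonneg[OF y])
qed

text \<open>A point with \<open>\<lceil>(n+1) \<theta>\<rceil> = a + 1\<close>: the offset \<open>1/(2m)\<close> keeps the coordinate sum below \<open>1\<close>, and the
  whole ball of radius \<open>cell_radius m n\<close> around it has the same ceiling vector.\<close>

definition cell_centre :: "nat \<Rightarrow> nat^'m \<Rightarrow> real^'m" where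
  "cell_centre n a = (\<chi> i. (real (a$i) + 1 / (2 * real CARD('m))) / real (Suc n))"

lemma cell_centre_Dm0:
  assumes a: "a \<in> simplex_grid UNIV n"
  shows "cell_centre n a \<in> (Dm0 :: (real^'m) set)"
proof -
  define s :: real where "s = 1 / (2 * real CARD('m))"
  have s: "s > 0" by (simp add: s_def)
  have pos: "cell_centre n a $ i > 0" for i unfolding cell_centre_def s_def[symmetric] using s by simp
  have "(\<Sum>i\<in>UNIV. cell_centre n a $ i) = (\<Sum>i\<in>UNIV. real (a$i) + s) / real (Suc n)"
    unfolding cell_centre_def s_def[symmetric] by (simp add: sum_divide_distrib)
  also have "(\<Sum>i\<in>UNIV. real (a$i) + s) = real (sum (vec_nth a) UNIV) + 1/2"
    by (simp add: sum.distrib s_def)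
  also have "real (sum (vec_nth a) UNIV) + 1/2 \<le> real n + 1"
  proof -
    have "sum (vec_nth a) UNIV \<le> n" using a by (simp add: simplex_grid_def)
    then have "real (sum (vec_nth a) UNIV) \<le> real n" by (simp only: of_nat_le_iff)
    then show ?thesis by linarith
  qed
  finally have "(\<Sum>i\<in>UNIV. cell_centre n a $ i) \<le> 1"
    by (simp add: divide_right_mono add.commute)
  then show ?thesis using pos unfolding Dm0_def mem_Dm by (auto intro: less_imp_le)
qed

definition cell_radius :: "nat \<Rightarrow> nat \<Rightarrow> real" where
  "cell_radius m n = 1 / (4 * real m * real (Suc n))"

lemma ceil_vec_near_cell_centre:
  fixes \<theta> :: "real^'m"
  assumes d: "dist \<theta> (cell_centre n a) < cell_radius CARD('m) n"
  shows "ceil_vec (Suc n) \<theta> = (\<chi> i. a$i + 1)"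
proof -
  define s :: real where "s = 1 / (2 * real CARD('m))"
  have s: "s > 0" "s \<le> 1/2" by (auto simp: s_def field_simps)
  have k: "real (Suc n) > 0" by simp
  have cr: "cell_radius CARD('m) n = s / (2 * real (Suc n))" by (simp add: cell_radius_def s_def field_simps)
  show ?thesis
  proof (subst vec_eq_iff, intro allI)
    fix i
    have "\<bar>\<theta>$i - cell_centre n a $ i\<bar> \<le> dist \<theta> (cell_centre n a)"
      by (metis dist_real_def dist_vec_nth_le)
    then have di: "\<bar>\<theta>$i - cell_centre n a $ i\<bar> < s / (2 * real (Suc n))" using d cr by simp
    have "\<bar>real (Suc n) * \<theta>$i - (real (a$i) + s)\<bar> = real (Suc n) * \<bar>\<theta>$i - cell_centre n a $ i\<bar>"
      unfolding cell_centre_def s_def[symmetric] using k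
      by (simp add: abs_mult[symmetric] field_simps del: of_nat_Suc)
    also have "\<dots> < real (Suc n) * (s / (2 * real (Suc n)))"
      using di k by (intro mult_strict_left_mono) auto
    also have "\<dots> = s / 2" using k by (simp add: field_simps del: of_nat_Suc)
    finally have b: "\<bar>real (Suc n) * \<theta>$i - (real (a$i) + s)\<bar> < s / 2" .
    from b have b1: "real (Suc n) * \<theta>$i - (real (a$i) + s) < s / 2"
      and b2: "-(s/2) < real (Suc n) * \<theta>$i - (real (a$i) + s)" by (simp_all only: abs_less_iff) linarith+
    have "\<lceil>real (Suc n) * \<theta>$i\<rceil> = int (a$i) + 1"
      using b1 b2 s by (subst ceiling_eq_iff) auto
    then show "ceil_vec (Suc n) \<theta> $ i = (\<chi> i. a$i + 1) $ i"
      unfolding ceil_vec_def by (simp add: nat_add_distrib del: of_nat_Suc)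
  qed
qed

lemma cell_radius_pos: "m > 0 \<Longrightarrow> cell_radius m n > 0"
  by (simp add: cell_radius_def)

lemma ceil_vec_cell_centre: "ceil_vec (Suc n) (cell_centre n a :: real^'m) = (\<chi> i. a$i + 1)"
  by (rule ceil_vec_near_cell_centre) (simp add: cell_radius_def)

lemma bern_dens_cell_centre:
  fixes a :: "nat^'m" and y :: "real^'m"
  assumes "a \<in> simplex_grid UNIV n"
  shows "bern_dens (Suc n) (cell_centre n a) y = fact (n + CARD('m)) / fact n * bernstein_simplex n y a"
  using assms ceil_vec_cell_centre by (rule bern_dens_eq_bernstein_simplex)

section \<open>Uniform approximation by finite Bernstein mixtures\<close>

lemma obtain_small_pos:
  fixes A e b :: real
  assumes "e > 0" "b > 0"
  obtains \<eta> where "\<eta> > 0" "\<eta> \<le> b" "A * \<eta> \<le> e"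
proof
  define \<eta> where "\<eta> = min b (e / (\<bar>A\<bar> + 1))"
  show "\<eta> > 0" "\<eta> \<le> b" using assms by (auto simp: \<eta>_def)
  have "A * \<eta> \<le> \<bar>A\<bar> * \<eta>"
    using \<open>\<eta> > 0\<close> by (intro mult_right_mono) auto
  also have "\<dots> \<le> \<bar>A\<bar> * (e / (\<bar>A\<bar> + 1))"
    by (intro mult_left_mono) (auto simp: \<eta>_def)
  also have "\<dots> \<le> e" using assms by (simp add: divide_le_eq field_simps)
  finally show "A * \<eta> \<le> e" .
qed

lemma Dtilde_continuous_on:
  assumes "q \<in> Dtilde X"
  shows "continuous_on (Dm \<times> X) (\<lambda>(y, x). q x y)"
  using assms by (simp add: Dtilde_def)

lemma Dtilde_bounded:
  fixes q :: "'x::metric_space \<Rightarrow> real^'m \<Rightarrow> real"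
  assumes q: "q \<in> Dtilde X" and X: "compact X"
  obtains M where "M \<ge> 0" "\<And>x y. x \<in> X \<Longrightarrow> y \<in> Dm \<Longrightarrow> \<bar>q x y\<bar> \<le> M"
proof -
  have "bounded ((\<lambda>(y, x). q x y) ` (Dm \<times> X))"
    by (intro compact_imp_bounded compact_continuous_image Dtilde_continuous_on[OF q]
              compact_Times compact_Dm X)
  then obtain M where M: "\<And>x y. x \<in> X \<Longrightarrow> y \<in> Dm \<Longrightarrow> \<bar>q x y\<bar> \<le> M"
    unfolding bounded_iff by force
  show ?thesis
    by (rule that[of "max M 0"]) (auto intro: order_trans[OF M])
qed

lemma Dtilde_equicontinuous:
  fixes q :: "'x::metric_space \<Rightarrow> real^'m \<Rightarrow> real"
  assumes q: "q \<in> Dtilde X" and X: "compact X" and e: "e > 0"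
  obtains \<delta> where "\<delta> > 0"
    "\<And>x y y'. x \<in> X \<Longrightarrow> y \<in> Dm \<Longrightarrow> y' \<in> Dm \<Longrightarrow> dist y y' < \<delta> \<Longrightarrow> \<bar>q x y - q x y'\<bar> \<le> e"
proof -
  have "uniformly_continuous_on (Dm \<times> X) (\<lambda>(y, x). q x y)"
    by (intro compact_uniformly_continuous Dtilde_continuous_on[OF q] compact_Times compact_Dm X)
  then obtain \<delta> where "\<delta> > 0" and \<delta>: "\<And>p p'. p \<in> Dm \<times> X \<Longrightarrow> p' \<in> Dm \<times> X \<Longrightarrow> dist p' p < \<delta> \<Longrightarrow>
      dist ((\<lambda>(y, x). q x y) p') ((\<lambda>(y, x). q x y) p) < e"
    using e unfolding uniformly_continuous_on_def by metis
  show ?thesis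
  proof (rule that[OF \<open>\<delta> > 0\<close>])
    fix x and y y' :: "real^'m" assume "x \<in> X" "y \<in> Dm" "y' \<in> Dm" "dist y y' < \<delta>"
    then show "\<bar>q x y - q x y'\<bar> \<le> e"
      using \<delta>[of "(y', x)" "(y, x)"] by (simp add: dist_Pair_Pair dist_real_def)
  qed
qed

lemma Dtilde_continuous_on_param:
  assumes q: "q \<in> Dtilde X" and y: "y \<in> Dm"
  shows "continuous_on X (\<lambda>x. q x y)"
proof -
  have "continuous_on X ((\<lambda>(y, x). q x y) \<circ> (\<lambda>x. (y, x)))"
    by (intro continuous_on_compose continuous_intros continuous_on_subset[OF Dtilde_continuous_on[OF q]])
       (auto simp: y)
  then show ?thesis by (simp add: o_def)
qed

lemma Dtilde_bernstein_approx:
  fixes q :: "'x::metric_space \<Rightarrow> real^'m \<Rightarrow> real"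
  assumes q: "q \<in> Dtilde X" and X: "compact X" and e: "e > 0"
  obtains n where "n \<ge> 1" "\<And>x y. x \<in> X \<Longrightarrow> y \<in> Dm \<Longrightarrow>
    \<bar>(\<Sum>a\<in>simplex_grid UNIV n. q x (grid_point n a) * bernstein_simplex n y a) - q x y\<bar> \<le> e"
proof -
  obtain M where "M \<ge> 0" and M: "\<And>x y. x \<in> X \<Longrightarrow> y \<in> Dm \<Longrightarrow> \<bar>q x y\<bar> \<le> M"
    using Dtilde_bounded[OF q X] by blast
  obtain \<delta> where \<delta>: "\<delta> > 0" and uc: "\<And>x y y'. x \<in> X \<Longrightarrow> y \<in> Dm \<Longrightarrow> y' \<in> Dm \<Longrightarrow> dist y y' < \<delta> \<Longrightarrow>
      \<bar>q x y - q x y'\<bar> \<le> e / 2"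
    using Dtilde_equicontinuous[OF q X, of "e / 2"] e by auto
  obtain n0 :: nat where n0: "4 * M * real CARD('m) / (\<delta>^2 * e) < real n0"
    using reals_Archimedean2 by blast
  define n where "n = Suc n0"
  have "4 * M * real CARD('m) / (\<delta>^2 * e) \<le> real n"
    using n0 by (simp add: n_def)
  then have "4 * M * real CARD('m) \<le> real n * (\<delta>^2 * e)"
    using \<delta> e by (simp add: pos_divide_le_eq)
  moreover have "real n > 0" by (simp add: n_def)
  ultimately have small: "2 * M * real CARD('m) / (real n * \<delta>^2) \<le> e / 2"
    using \<delta> by (simp add: pos_divide_le_eq field_simps)
  show ?thesis
  proof (rule that)
    show "n \<ge> 1" by (simp add: n_def)
    fix x and y :: "real^'m" assume "x \<in> X" "y \<in> Dm"
    then have "\<bar>(\<Sum>a\<in>simplex_grid UNIV n. q x (grid_point n a) * bernstein_simplex n y a) - q x y\<bar>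
        \<le> e / 2 + 2 * M * real CARD('m) / (real n * \<delta>^2)"
      using M uc \<delta> e by (intro bernstein_simplex_approx[where f = "q x"]) (auto simp: n_def)
    with small show "\<bar>(\<Sum>a\<in>simplex_grid UNIV n. q x (grid_point n a) * bernstein_simplex n y a) - q x y\<bar> \<le> e"
      by simp
  qed
qed

lemma bernstein_mass_close:
  fixes f :: "real^'m \<Rightarrow> real"
  assumes f: "(f has_integral 1) Dm"
    and approx: "\<And>y. y \<in> Dm \<Longrightarrow> \<bar>(\<Sum>a\<in>simplex_grid UNIV n. f (grid_point n a) * bernstein_simplex n y a) - f y\<bar> \<le> e"
  shows "\<bar>(\<Sum>a\<in>simplex_grid UNIV n. f (grid_point n a)) * (fact n / fact (n + CARD('m))) - 1\<bar> \<le> e"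
proof (rule has_integral_Dm_abs_le[OF _ approx])
  have "((\<lambda>y. \<Sum>a\<in>simplex_grid UNIV n. f (grid_point n a) * bernstein_simplex n y a) has_integral
      (\<Sum>a\<in>simplex_grid UNIV n. f (grid_point n a) * (fact n / fact (n + CARD('m))))) Dm"
    by (intro has_integral_sum finite_simplex_grid has_integral_mult_right has_integral_bernstein_simplex)
  then have "((\<lambda>y. \<Sum>a\<in>simplex_grid UNIV n. f (grid_point n a) * bernstein_simplex n y a) has_integral
      (\<Sum>a\<in>simplex_grid UNIV n. f (grid_point n a)) * (fact n / fact (n + CARD('m)))) Dm"
    by (simp only: sum_distrib_right)
  then show "((\<lambda>y. (\<Sum>a\<in>simplex_grid UNIV n. f (grid_point n a) * bernstein_simplex n y a) - f y) has_integral
      (\<Sum>a\<in>simplex_grid UNIV n. f (grid_point n a)) * (fact n / fact (n + CARD('m))) - 1) Dm"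
    by (rule has_integral_diff[OF _ f])
qed

lemma abs_divide_sub_le:
  fixes B S Q :: real
  assumes B: "\<bar>B - Q\<bar> \<le> e" and Q: "\<bar>Q\<bar> \<le> M" and S: "\<bar>S - 1\<bar> \<le> e" "e \<le> 1/2"
  shows "\<bar>B / S - Q\<bar> \<le> 2 * (1 + M) * e"
proof -
  have "S \<ge> 1/2" using S by linarith
  have "\<bar>B - S * Q\<bar> \<le> \<bar>B - Q\<bar> + \<bar>Q\<bar> * \<bar>S - 1\<bar>"
    by (simp add: abs_mult[symmetric] algebra_simps abs_triangle_ineq4 order_trans[OF _ abs_triangle_ineq])
  also have "\<dots> \<le> e + M * e"
    using B Q S by (intro add_mono mult_mono) auto
  finally have "\<bar>B - S * Q\<bar> \<le> (1 + M) * e"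
    by (simp add: algebra_simps)
  then have "\<bar>B - S * Q\<bar> / S \<le> (1 + M) * e / (1/2)"
    using \<open>S \<ge> 1/2\<close> by (intro frac_le) auto
  moreover have "\<bar>B / S - Q\<bar> = \<bar>B - S * Q\<bar> / S"
    using \<open>S \<ge> 1/2\<close> by (simp add: field_simps)
  ultimately show ?thesis
    by (simp add: algebra_simps)
qed

text \<open>Mixing in the fraction \<open>\<tau>\<close> of the uniform weight makes all weights positive at a controlled
  cost.\<close>

definition renormalise :: "real \<Rightarrow> 'i set \<Rightarrow> ('i \<Rightarrow> real) \<Rightarrow> 'i \<Rightarrow> real" where
  "renormalise \<tau> G w a = (1 - \<tau>) * (w a / sum w G) + \<tau> / card G"

lemma renormalise_pos:
  assumes "finite G" "G \<noteq> {}" "0 < \<tau>" "\<tau> \<le> 1" "\<And>b. b \<in> G \<Longrightarrow> w b \<ge> 0" "a \<in> G"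
  shows "renormalise \<tau> G w a > 0"
proof -
  have "0 \<le> (1 - \<tau>) * (w a / sum w G)"
    using assms by (intro mult_nonneg_nonneg divide_nonneg_nonneg sum_nonneg) auto
  moreover have "\<tau> / card G > 0"
    using assms by (simp add: card_gt_0_iff)
  ultimately show ?thesis by (simp add: renormalise_def)
qed

lemma sum_renormalise:
  assumes "finite G" "G \<noteq> {}" "sum w G \<noteq> 0"
  shows "(\<Sum>a\<in>G. renormalise \<tau> G w a) = 1"
  using assms by (simp add: renormalise_def sum.distrib sum_divide_distrib[symmetric] sum_distrib_left[symmetric])

lemma renormalised_mixture_error:
  fixes w P :: "'i \<Rightarrow> real"
  assumes G: "finite G" "G \<noteq> {}" and P: "sum P G = 1" and K: "K > 0"
    and S: "\<bar>sum w G / K - 1\<bar> \<le> e" "e \<le> 1/2"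
    and B: "\<bar>(\<Sum>a\<in>G. w a * P a) - Q\<bar> \<le> e" and Q: "\<bar>Q\<bar> \<le> M"
    and \<tau>: "0 \<le> \<tau>" "\<tau> \<le> 1"
  shows "\<bar>(\<Sum>a\<in>G. renormalise \<tau> G w a * (K * P a)) - Q\<bar> \<le> 2 * (1 + M) * e + \<tau> * (K + M)"
proof -
  define B where "B = (\<Sum>a\<in>G. w a * P a)"
  define S where "S = sum w G / K"
  have "S \<ge> 1/2" using S by (simp add: S_def abs_le_iff)
  have "sum w G = K * S" using K by (simp add: S_def)
  have "(\<Sum>a\<in>G. renormalise \<tau> G w a * (K * P a))
      = (\<Sum>a\<in>G. (1 - \<tau>) / S * (w a * P a) + \<tau> * K / card G * P a)"
    using K \<open>S \<ge> 1/2\<close> \<open>sum w G = K * S\<close>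
    by (intro sum.cong refl) (simp add: renormalise_def field_simps)
  also have "\<dots> = (1 - \<tau>) / S * B + \<tau> * K / card G * sum P G"
    by (simp add: B_def sum.distrib sum_distrib_left)
  finally have mix: "(\<Sum>a\<in>G. renormalise \<tau> G w a * (K * P a)) - Q
      = (1 - \<tau>) * (B / S - Q) + \<tau> * (K / card G - Q)"
    using P by (simp add: algebra_simps)
  have "\<bar>B / S - Q\<bar> \<le> 2 * (1 + M) * e"
    using B Q S by (intro abs_divide_sub_le) (auto simp: B_def S_def)
  moreover have "\<bar>K / card G - Q\<bar> \<le> K + M"
  proof -
    have "card G > 0" using G by (simp add: card_gt_0_iff)
    then have "0 \<le> K / card G" "K / card G \<le> K"
      using K by (auto simp: divide_le_eq)
    then show ?thesis using Q by linarith
  qed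
  ultimately have "(1 - \<tau>) * \<bar>B / S - Q\<bar> + \<tau> * \<bar>K / card G - Q\<bar> \<le> 1 * (2 * (1 + M) * e) + \<tau> * (K + M)"
    using \<tau> by (intro add_mono mult_mono) auto
  then show ?thesis
    unfolding mix using \<tau> abs_triangle_ineq[of "(1 - \<tau>) * (B / S - Q)" "\<tau> * (K / card G - Q)"]
    by (simp add: abs_mult)
qed

lemma continuous_on_renormalise:
  assumes "\<And>b. b \<in> G \<Longrightarrow> continuous_on X (w b)" "\<And>x. x \<in> X \<Longrightarrow> (\<Sum>b\<in>G. w b x) \<noteq> 0" "a \<in> G"
  shows "continuous_on X (\<lambda>x. renormalise \<tau> G (\<lambda>b. w b x) a)"
  unfolding renormalise_def using assms by (intro continuous_intros) auto

lemma Dtilde_bernstein_mixture_approx: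
  fixes q :: "'x::metric_space \<Rightarrow> real^'m \<Rightarrow> real"
  assumes q: "q \<in> Dtilde X" and X: "compact X" and \<epsilon>: "\<epsilon> > 0"
  obtains n c where
    "\<And>a. a \<in> simplex_grid UNIV n \<Longrightarrow> continuous_on X (c a)"
    "\<And>a x. a \<in> simplex_grid UNIV n \<Longrightarrow> x \<in> X \<Longrightarrow> c a x > 0"
    "\<And>x. x \<in> X \<Longrightarrow> (\<Sum>a\<in>simplex_grid UNIV n. c a x) = 1"
    "\<And>x y. x \<in> X \<Longrightarrow> y \<in> Dm \<Longrightarrow>
       \<bar>(\<Sum>a\<in>simplex_grid UNIV n. c a x * bern_dens (Suc n) (cell_centre n a) y) - q x y\<bar> < \<epsilon>"
proof -
  obtain M where "M \<ge> 0" and M: "\<And>x y. x \<in> X \<Longrightarrow> y \<in> Dm \<Longrightarrow> \<bar>q x y\<bar> \<le> M"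
    using Dtilde_bounded[OF q X] by blast
  obtain e where e: "e > 0" "e \<le> 1/2" "2 * (1 + M) * e \<le> \<epsilon> / 4"
    using obtain_small_pos[of "\<epsilon> / 4" "1/2" "2 * (1 + M)"] \<epsilon> by auto
  obtain n where "n \<ge> 1" and approx: "\<And>x y. x \<in> X \<Longrightarrow> y \<in> Dm \<Longrightarrow>
      \<bar>(\<Sum>a\<in>simplex_grid UNIV n. q x (grid_point n a) * bernstein_simplex n y a) - q x y\<bar> \<le> e"
    using Dtilde_bernstein_approx[OF q X \<open>e > 0\<close>] by blast
  define G where "G = simplex_grid (UNIV :: 'm set) n"
  define K :: real where "K = fact (n + CARD('m)) / fact n"
  have "finite G" "G \<noteq> {}" "K > 0"
    using finite_simplex_grid[of "UNIV :: 'm set" n] zero_in_simplex_grid[of "UNIV :: 'm set" n]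
    by (auto simp: G_def K_def)
  have grid_Dm: "grid_point n a \<in> Dm" if "a \<in> G" for a
    using that \<open>n \<ge> 1\<close> by (simp add: G_def grid_point_Dm)
  have mass: "\<bar>(\<Sum>a\<in>G. q x (grid_point n a)) / K - 1\<bar> \<le> e" if "x \<in> X" for x
    using bernstein_mass_close[of "q x" n e] q that approx by (auto simp: Dtilde_def G_def K_def)
  have mass_pos: "(\<Sum>a\<in>G. q x (grid_point n a)) > 0" if "x \<in> X" for x
  proof -
    have "(\<Sum>a\<in>G. q x (grid_point n a)) / K > 0"
      using mass[OF that] e by (simp add: abs_le_iff)
    then show ?thesis using \<open>K > 0\<close> by (simp add: zero_less_divide_iff)
  qed
  obtain \<tau> where \<tau>: "\<tau> > 0" "\<tau> \<le> 1" "(K + M) * \<tau> \<le> \<epsilon> / 4"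
    using obtain_small_pos[of "\<epsilon> / 4" 1 "K + M"] \<epsilon> by auto
  show ?thesis
  proof (rule that[of n "\<lambda>a x. renormalise \<tau> G (\<lambda>b. q x (grid_point n b)) a"])
    fix a :: "nat^'m" assume "a \<in> simplex_grid UNIV n"
    then show "continuous_on X (\<lambda>x. renormalise \<tau> G (\<lambda>b. q x (grid_point n b)) a)"
      using grid_Dm
      by (intro continuous_on_renormalise Dtilde_continuous_on_param[OF q]) (auto simp: G_def dest!: mass_pos)
    show "renormalise \<tau> G (\<lambda>b. q x (grid_point n b)) a > 0" if "x \<in> X" for x
      using \<open>finite G\<close> \<open>G \<noteq> {}\<close> \<tau> q that grid_Dm \<open>a \<in> simplex_grid UNIV n\<close>
      by (intro renormalise_pos) (auto simp: Dtilde_def G_def)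
  next
    fix x assume "x \<in> X"
    then show "(\<Sum>a\<in>simplex_grid UNIV n. renormalise \<tau> G (\<lambda>b. q x (grid_point n b)) a) = 1"
      using sum_renormalise[OF \<open>finite G\<close> \<open>G \<noteq> {}\<close>] mass_pos[of x] by (simp add: G_def)
  next
    fix x and y :: "real^'m" assume "x \<in> X" "y \<in> Dm"
    have "\<bar>(\<Sum>a\<in>G. renormalise \<tau> G (\<lambda>b. q x (grid_point n b)) a * (K * bernstein_simplex n y a)) - q x y\<bar>
        \<le> 2 * (1 + M) * e + \<tau> * (K + M)"
      using \<open>finite G\<close> \<open>G \<noteq> {}\<close> \<open>K > 0\<close> mass[OF \<open>x \<in> X\<close>] e \<tau>
        approx[OF \<open>x \<in> X\<close> \<open>y \<in> Dm\<close>] M[OF \<open>x \<in> X\<close> \<open>y \<in> Dm\<close>]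
      by (intro renormalised_mixture_error) (auto simp: G_def sum_bernstein_simplex)
    also have "\<dots> < \<epsilon>"
      using e \<tau> \<epsilon> by (simp add: algebra_simps)
    finally show "\<bar>(\<Sum>a\<in>simplex_grid UNIV n. renormalise \<tau> G (\<lambda>b. q x (grid_point n b)) a
        * bern_dens (Suc n) (cell_centre n a) y) - q x y\<bar> < \<epsilon>"
      by (simp add: G_def K_def bern_dens_cell_centre)
  qed
qed

lemma Dtilde_finite_mixture_approx:
  fixes q :: "'x::metric_space \<Rightarrow> real^'m \<Rightarrow> real"
  assumes q: "q \<in> Dtilde X" and X: "compact X" and \<epsilon>: "\<epsilon> > 0"
  obtains L \<xi> n c where "(L :: nat) \<ge> 1" "\<And>l. l < L \<Longrightarrow> \<xi> l \<in> Dm0"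
    "\<And>l \<theta>. l < L \<Longrightarrow> dist \<theta> (\<xi> l) < cell_radius CARD('m) n \<Longrightarrow> bern_dens (Suc n) \<theta> = bern_dens (Suc n) (\<xi> l)"
    "\<And>l. l < L \<Longrightarrow> continuous_on X (c l)"
    "\<And>l x. l < L \<Longrightarrow> x \<in> X \<Longrightarrow> c l x > 0"
    "\<And>x. x \<in> X \<Longrightarrow> (\<Sum>l<L. c l x) = 1"
    "\<And>x y. x \<in> X \<Longrightarrow> y \<in> Dm \<Longrightarrow> \<bar>(\<Sum>l<L. c l x * bern_dens (Suc n) (\<xi> l) y) - q x y\<bar> < \<epsilon>"
proof -
  obtain n c where c_cont: "\<And>a. a \<in> simplex_grid UNIV n \<Longrightarrow> continuous_on X (c a)"
    and c_pos: "\<And>a x. a \<in> simplex_grid UNIV n \<Longrightarrow> x \<in> X \<Longrightarrow> c a x > 0"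
    and c_sum: "\<And>x. x \<in> X \<Longrightarrow> (\<Sum>a\<in>simplex_grid UNIV n. c a x) = 1"
    and c_err: "\<And>x y. x \<in> X \<Longrightarrow> y \<in> Dm \<Longrightarrow>
       \<bar>(\<Sum>a\<in>simplex_grid UNIV n. c a x * bern_dens (Suc n) (cell_centre n a) y) - q x y\<bar> < \<epsilon>"
    using Dtilde_bernstein_mixture_approx[OF q X \<epsilon>] by blast
  define G where "G = simplex_grid (UNIV :: 'm set) n"
  define L where "L = card G"
  obtain e where e: "bij_betw e {..<L} G"
    using ex_bij_betw_nat_finite[of G] finite_simplex_grid by (auto simp: L_def G_def atLeast0LessThan)
  have eG: "e l \<in> G" if "l < L" for l
    using e that by (auto simp: bij_betw_def)
  have reindex: "(\<Sum>l<L. f (e l)) = (\<Sum>a\<in>G. f a)" for f :: "nat^'m \<Rightarrow> real"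
    using sum.reindex_bij_betw[OF e] .
  show ?thesis
  proof (rule that[of L "\<lambda>l. cell_centre n (e l)" n "\<lambda>l. c (e l)"])
    show "L \<ge> 1"
      using finite_simplex_grid zero_in_simplex_grid[of "UNIV :: 'm set" n]
      by (auto simp: L_def G_def Suc_le_eq card_gt_0_iff)
    fix l assume "l < L"
    then have "e l \<in> simplex_grid UNIV n" using eG by (simp add: G_def)
    then show "cell_centre n (e l) \<in> Dm0" "continuous_on X (c (e l))"
      by (simp_all add: cell_centre_Dm0 c_cont)
    show "bern_dens (Suc n) \<theta> = bern_dens (Suc n) (cell_centre n (e l))"
      if "dist \<theta> (cell_centre n (e l)) < cell_radius CARD('m) n" for \<theta>
      using ceil_vec_near_cell_centre[OF that] by (intro bern_dens_cong) (simp add: ceil_vec_cell_centre)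
    show "c (e l) x > 0" if "x \<in> X" for x
      using \<open>e l \<in> simplex_grid UNIV n\<close> that by (rule c_pos)
  next
    fix x assume "x \<in> X"
    then show "(\<Sum>l<L. c (e l) x) = 1"
      using c_sum reindex[of "\<lambda>a. c a x"] by (simp add: G_def)
    fix y :: "real^'m" assume "y \<in> Dm"
    with \<open>x \<in> X\<close> show "\<bar>(\<Sum>l<L. c (e l) x * bern_dens (Suc n) (cell_centre n (e l)) y) - q x y\<bar> < \<epsilon>"
      using c_err reindex[of "\<lambda>a. c a x * bern_dens (Suc n) (cell_centre n a) y"] by (simp add: G_def)
  qed
qed

lemma sum_stick: "(\<Sum>j<N. stick V j) = 1 - (\<Prod>l<N. 1 - V l)"
  by (induction N) (simp_all add: stick_def algebra_simps)

lemma stick_nonneg: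
  assumes "\<And>l. 0 \<le> V l \<and> V l \<le> (1::real)"
  shows "stick V j \<ge> 0"
  using assms unfolding stick_def by (auto intro!: mult_nonneg_nonneg prod_nonneg)

lemma abs_stick_diff_le:
  fixes V W :: "nat \<Rightarrow> real"
  assumes "\<And>l. 0 \<le> V l \<and> V l \<le> 1" "\<And>l. 0 \<le> W l \<and> W l \<le> 1"
  shows "\<bar>stick V j - stick W j\<bar> \<le> (\<Sum>l<Suc j. \<bar>V l - W l\<bar>)"
proof -
  define F where "F U l = (if l = j then U l else 1 - U l)" for U :: "nat \<Rightarrow> real" and l
  have "(\<Prod>l<j. F U l) = (\<Prod>l<j. 1 - U l)" for U
    by (intro prod.cong) (auto simp: F_def)
  then have "stick U j = (\<Prod>l<Suc j. F U l)" for U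
    by (simp add: stick_def F_def mult.commute)
  then have "\<bar>stick V j - stick W j\<bar> \<le> (\<Sum>l<Suc j. \<bar>F V l - F W l\<bar>)"
    using norm_prod_diff[of "{..<Suc j}" "F V" "F W"] assms by (simp add: F_def)
  also have "\<dots> = (\<Sum>l<Suc j. \<bar>V l - W l\<bar>)"
    by (intro sum.cong refl) (auto simp: F_def abs_minus_commute)
  finally show ?thesis .
qed

lemma stick_mixture_tail:
  fixes V D :: "nat \<Rightarrow> real"
  assumes V: "\<And>l. 0 \<le> V l \<and> V l \<le> 1" and D: "\<And>j. 0 \<le> D j \<and> D j \<le> C"
  shows "\<bar>(\<Sum>j. stick V j * D j) - (\<Sum>j<N. stick V j * D j)\<bar> \<le> C * (\<Prod>l<N. 1 - V l)"
proof -
  have nonneg: "stick V j * D j \<ge> 0" for j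
    using stick_nonneg[OF V] D by simp
  have "C \<ge> 0" using D[of 0] by simp
  have rest: "0 \<le> (\<Prod>l<M. 1 - V l)" "(\<Prod>l<M. 1 - V l) \<le> 1" for M
    using V by (auto intro!: prod_nonneg prod_le_1)
  have partial: "(\<Sum>j<M. stick V j * D j) \<le> (\<Sum>j<N. stick V j * D j) + C * (\<Prod>l<N. 1 - V l)" for M
  proof (cases "M \<le> N")
    case True
    then show ?thesis
      using nonneg rest[of N] \<open>C \<ge> 0\<close> by (intro add_increasing2 sum_mono2) auto
  next
    case False
    then have split: "{..<M} = {..<N} \<union> {N..<M}" "{..<N} \<inter> {N..<M} = {}" by auto
    have "(\<Sum>j\<in>{N..<M}. stick V j * D j) \<le> (\<Sum>j\<in>{N..<M}. stick V j * C)"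
      using stick_nonneg[OF V] D by (intro sum_mono mult_left_mono) auto
    also have "\<dots> = C * ((\<Sum>j<M. stick V j) - (\<Sum>j<N. stick V j))"
      unfolding split(1) by (subst sum.union_disjoint) (use split in \<open>auto simp: sum_distrib_left mult.commute\<close>)
    also have "\<dots> \<le> C * (\<Prod>l<N. 1 - V l)"
      using \<open>C \<ge> 0\<close> rest[of M] by (intro mult_left_mono) (auto simp: sum_stick)
    finally show ?thesis
      unfolding split(1) by (subst sum.union_disjoint) (use split in auto)
  qed
  have "summable (\<lambda>j. stick V j * D j)"
    using nonneg partial by (intro summableI_nonneg_bounded) auto
  then have "(\<Sum>j<N. stick V j * D j) \<le> (\<Sum>j. stick V j * D j)"
    "(\<Sum>j. stick V j * D j) \<le> (\<Sum>j<N. stick V j * D j) + C * (\<Prod>l<N. 1 - V l)"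
    using nonneg partial by (auto intro: sum_le_suminf suminf_le_const)
  then show ?thesis by simp
qed

lemma stick_mixture_approx:
  fixes V W D :: "nat \<Rightarrow> real"
  assumes V: "\<And>l. 0 \<le> V l \<and> V l \<le> 1" and W: "\<And>l. 0 \<le> W l \<and> W l \<le> 1"
    and W0: "(\<Prod>l<N. 1 - W l) = 0" and close: "\<And>l. l < N \<Longrightarrow> \<bar>V l - W l\<bar> \<le> \<eta>"
    and D: "\<And>j. 0 \<le> D j \<and> D j \<le> C"
  shows "\<bar>(\<Sum>j. stick V j * D j) - (\<Sum>j<N. stick W j * D j)\<bar> \<le> real N * (real N + 1) * \<eta> * C"
proof -
  have "C \<ge> 0" using D[of 0] by simp
  have close_sum: "(\<Sum>l<M. \<bar>V l - W l\<bar>) \<le> real N * \<eta>" if "M \<le> N" for M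
  proof -
    have "\<eta> \<ge> 0" if "N > 0" using close[OF that] by linarith
    then have "(\<Sum>l<M. \<bar>V l - W l\<bar>) \<le> real M * \<eta>"
      using sum_mono[of "{..<M}" "\<lambda>l. \<bar>V l - W l\<bar>" "\<lambda>_. \<eta>"] close \<open>M \<le> N\<close> by auto
    also have "\<dots> \<le> real N * \<eta>"
      using \<open>M \<le> N\<close> \<open>N > 0 \<Longrightarrow> \<eta> \<ge> 0\<close> by (cases "N = 0") (auto intro: mult_right_mono)
    finally show ?thesis .
  qed
  have "\<bar>(\<Sum>j<N. stick V j * D j) - (\<Sum>j<N. stick W j * D j)\<bar> \<le> (\<Sum>j<N. \<bar>stick V j - stick W j\<bar> * C)"
    unfolding sum_subtractf[symmetric] left_diff_distrib[symmetric]
    using D by (intro order_trans[OF sum_abs] sum_mono) (auto simp: abs_mult intro: mult_left_mono)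
  also have "\<dots> \<le> (\<Sum>j<N. real N * \<eta> * C)"
  proof (intro sum_mono mult_right_mono \<open>C \<ge> 0\<close>)
    fix j assume "j \<in> {..<N}"
    have "\<bar>stick V j - stick W j\<bar> \<le> (\<Sum>l<Suc j. \<bar>V l - W l\<bar>)"
      by (rule abs_stick_diff_le) (use V W in auto)
    also have "\<dots> \<le> real N * \<eta>"
      using \<open>j \<in> {..<N}\<close> by (intro close_sum) simp
    finally show "\<bar>stick V j - stick W j\<bar> \<le> real N * \<eta>" .
  qed
  finally have head: "\<bar>(\<Sum>j<N. stick V j * D j) - (\<Sum>j<N. stick W j * D j)\<bar> \<le> real N * real N * \<eta> * C"
    by simp
  have "(\<Prod>l<N. 1 - V l) = \<bar>(\<Prod>l<N. 1 - V l) - (\<Prod>l<N. 1 - W l)\<bar>"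
    unfolding W0 using V by (simp add: prod_nonneg)
  also have "\<dots> \<le> (\<Sum>l<N. \<bar>V l - W l\<bar>)"
    using norm_prod_diff[of "{..<N}" "\<lambda>l. 1 - V l" "\<lambda>l. 1 - W l"] V W by (simp add: abs_minus_commute)
  also have "\<dots> \<le> real N * \<eta>" by (rule close_sum) simp
  finally have "C * (\<Prod>l<N. 1 - V l) \<le> C * (real N * \<eta>)"
    using \<open>C \<ge> 0\<close> by (intro mult_left_mono)
  moreover have "\<bar>(\<Sum>j. stick V j * D j) - (\<Sum>j<N. stick V j * D j)\<bar> \<le> C * (\<Prod>l<N. 1 - V l)"
    by (rule stick_mixture_tail) (use V D in auto)
  ultimately show ?thesis
    using head by (simp add: algebra_simps)
qed

definition stick_fractions :: "nat \<Rightarrow> (nat \<Rightarrow> real) \<Rightarrow> nat \<Rightarrow> real" where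
  "stick_fractions L c l = (if l < L then c l / (1 - (\<Sum>i<l. c i)) else 0)"

lemma le_one_minus_sum_lessThan:
  fixes c :: "nat \<Rightarrow> real"
  assumes pos: "\<And>l. l < L \<Longrightarrow> c l > 0" and sum: "(\<Sum>l<L. c l) = 1" and "l < L"
  shows "c l \<le> 1 - (\<Sum>i<l. c i)"
proof -
  have "(\<Sum>i<Suc l. c i) \<le> (\<Sum>i<L. c i)"
    using pos \<open>l < L\<close> by (intro sum_mono2) (auto intro: less_imp_le)
  then show ?thesis using sum by simp
qed

context
  fixes L :: nat and c :: "nat \<Rightarrow> real"
  assumes pos: "\<And>l. l < L \<Longrightarrow> c l > 0" and sum: "(\<Sum>l<L. c l) = 1"
begin

lemma stick_fractions_bounds: "0 \<le> stick_fractions L c l" "stick_fractions L c l \<le> 1"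
  using le_one_minus_sum_lessThan[OF pos sum, of l] pos[of l]
  by (auto simp: stick_fractions_def divide_le_eq_1)

lemma prod_one_minus_stick_fractions:
  "l \<le> L \<Longrightarrow> (\<Prod>i<l. 1 - stick_fractions L c i) = 1 - (\<Sum>i<l. c i)"
proof (induction l)
  case (Suc l)
  then have "c l \<le> 1 - (\<Sum>i<l. c i)" "c l > 0"
    using le_one_minus_sum_lessThan[OF pos sum] pos by auto
  have "(\<Prod>i<Suc l. 1 - stick_fractions L c i) = (1 - (\<Sum>i<l. c i)) * (1 - c l / (1 - (\<Sum>i<l. c i)))"
    using Suc by (simp add: stick_fractions_def)
  also have "\<dots> = 1 - (\<Sum>i<Suc l. c i)"
    using \<open>c l \<le> 1 - (\<Sum>i<l. c i)\<close> \<open>c l > 0\<close> by (simp add: field_simps)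
  finally show ?case .
qed simp

lemma stick_stick_fractions: "l < L \<Longrightarrow> stick (stick_fractions L c) l = c l"
  using le_one_minus_sum_lessThan[OF pos sum, of l] pos[of l] prod_one_minus_stick_fractions[of l]
  by (simp add: stick_def stick_fractions_def)

lemma prod_one_minus_stick_fractions_eq_0: "(\<Prod>l<L. 1 - stick_fractions L c l) = 0"
  using prod_one_minus_stick_fractions[of L] sum by simp

end

lemma continuous_on_stick_fractions:
  fixes c :: "nat \<Rightarrow> 'x::topological_space \<Rightarrow> real"
  assumes cont: "\<And>l. l < L \<Longrightarrow> continuous_on X (c l)" and pos: "\<And>l x. l < L \<Longrightarrow> x \<in> X \<Longrightarrow> c l x > 0"
    and sum: "\<And>x. x \<in> X \<Longrightarrow> (\<Sum>l<L. c l x) = 1"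
  shows "continuous_on X (\<lambda>x. stick_fractions L (\<lambda>l. c l x) j)"
proof (cases "j < L")
  case True
  have "(\<Sum>i<j. c i x) \<noteq> 1" if "x \<in> X" for x
    using le_one_minus_sum_lessThan[of L "\<lambda>l. c l x" j] pos sum that True by fastforce
  then show ?thesis
    using True by (simp add: stick_fractions_def) (intro continuous_intros cont; auto)
qed (simp add: stick_fractions_def)

lemma Linf_dist_le:
  assumes "\<And>x y. x \<in> X \<Longrightarrow> y \<in> Dm \<Longrightarrow> \<bar>f x y - q x y\<bar> \<le> e"
  shows "Linf_dist X f q \<le> ereal e"
  unfolding Linf_dist_def using assms by (intro SUP_least) auto

lemma SUP_ereal_less_imp_less:
  fixes F :: "'x \<Rightarrow> real"
  assumes "(SUP x\<in>X. ereal (F x)) < ereal e" "x \<in> X"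
  shows "F x < e"
  using order.strict_trans1[OF SUP_upper[OF assms(2)] assms(1)] by simp

lemma pos_prob_in_mono: "pos_prob_in M F E \<Longrightarrow> E \<subseteq> E' \<Longrightarrow> pos_prob_in M F E'"
  unfolding pos_prob_in_def by blast

lemma indep_ingredients_pos_prob:
  assumes M: "prob_space M" and ind: "indep_ingredients M Fk Fw Fa"
    and EK: "pos_prob_in M Fk EK"
    and EW: "\<And>j. j < N \<Longrightarrow> pos_prob_in M (Fw j) (EW j)"
    and EA: "\<And>j. j < N \<Longrightarrow> pos_prob_in M (Fa j) (EA j)"
  shows "pos_prob_in M (sets M) (EK \<inter> (\<Inter>j<N. EW j) \<inter> (\<Inter>j<N. EA j))"
proof -
  interpret prob_space M by (rule M)
  define F where "F = (\<lambda>i. case i of IK \<Rightarrow> Fk | IW j \<Rightarrow> Fw j | IA j \<Rightarrow> Fa j)"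
  define E where "E = (\<lambda>i. case i of IK \<Rightarrow> EK | IW j \<Rightarrow> EW j | IA j \<Rightarrow> EA j)"
  define J where "J = insert IK (IW ` {..<N} \<union> IA ` {..<N})"
  have "\<forall>i\<in>J. \<exists>B. B \<in> F i \<and> B \<subseteq> E i \<and> prob B > 0"
    using EK EW EA by (auto simp: J_def F_def E_def pos_prob_in_def Bex_def)
  then obtain A where A: "\<And>i. i \<in> J \<Longrightarrow> A i \<in> F i \<and> A i \<subseteq> E i \<and> prob (A i) > 0"
    by (metis bchoice)
  have indep: "indep_sets F UNIV"
    using ind by (simp add: indep_ingredients_def F_def)
  have "finite J" "J \<noteq> {}" by (auto simp: J_def)
  have "A i \<in> events" if "i \<in> J" for i
    using A[OF that] indep by (auto simp: indep_sets_def)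
  then have "(\<Inter>i\<in>J. A i) \<in> events"
    using \<open>finite J\<close> \<open>J \<noteq> {}\<close> by (intro sets.finite_INT) auto
  moreover have "prob (\<Inter>i\<in>J. A i) = (\<Prod>i\<in>J. prob (A i))"
    using indep \<open>finite J\<close> \<open>J \<noteq> {}\<close> A unfolding indep_sets_def by (auto simp: Pi_iff)
  then have "prob (\<Inter>i\<in>J. A i) > 0"
    using A by (auto intro: prod_pos)
  moreover have "(\<Inter>i\<in>J. A i) \<subseteq> EK \<inter> (\<Inter>j<N. EW j) \<inter> (\<Inter>j<N. EA j)"
  proof -
    have sub: "(\<Inter>i\<in>J. A i) \<subseteq> E i" if "i \<in> J" for i
      using A that by blast
    have "(\<Inter>i\<in>J. A i) \<subseteq> EK" using sub[of IK] by (simp add: J_def E_def)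
    moreover have "(\<Inter>i\<in>J. A i) \<subseteq> EW j" "(\<Inter>i\<in>J. A i) \<subseteq> EA j" if "j < N" for j
      using sub[of "IW j"] sub[of "IA j"] that by (simp_all add: J_def E_def)
    ultimately show ?thesis by blast
  qed
  ultimately show ?thesis
    unfolding pos_prob_in_def by blast
qed

lemma cond_iii_pos_prob:
  assumes "cond_iii M k" "n \<ge> 1"
  shows "pos_prob_in M (nat_sigma M k) {\<omega>\<in>space M. k \<omega> = n}"
proof -
  have "k -` {n} \<inter> space M \<in> nat_sigma M k"
    unfolding nat_sigma_def by (rule in_vimage_algebra) simp
  moreover have "k -` {n} \<inter> space M = {\<omega>\<in>space M. k \<omega> = n}" by auto
  ultimately show ?thesis
    using assms unfolding pos_prob_in_def cond_iii_def by auto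
qed

lemma cond_i_pos_prob:
  assumes "cond_i M X z h" "continuous_on X g" "g ` X \<subseteq> Dm0" "r > 0"
  shows "pos_prob_in M (proc_sigma M X (z j)) {\<omega>\<in>space M. \<forall>x\<in>X. dist (h x (z j \<omega> x)) (g x) < r}"
proof (rule pos_prob_in_mono)
  show "pos_prob_in M (proc_sigma M X (z j))
      {\<omega>\<in>space M. (SUP x\<in>X. ereal (norm (h x (z j \<omega> x) - g x))) < ereal r}"
    using assms unfolding cond_i_def by blast
qed (auto simp: dist_norm dest: SUP_ereal_less_imp_less)

lemma cond_ii_pos_prob:
  assumes "cond_ii M X \<eta> v" "continuous_on X g" "g ` X \<subseteq> {0..1}" "e > 0"
  shows "pos_prob_in M (proc_sigma M X (\<eta> j)) {\<omega>\<in>space M. \<forall>x\<in>X. \<bar>v x (\<eta> j \<omega> x) - g x\<bar> < e}"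
proof (rule pos_prob_in_mono)
  show "pos_prob_in M (proc_sigma M X (\<eta> j)) {\<omega>\<in>space M. (SUP x\<in>X. ereal \<bar>v x (\<eta> j \<omega> x) - g x\<bar>) < ereal e}"
    using assms unfolding cond_ii_def by blast
qed (auto dest: SUP_ereal_less_imp_less)

lemma full_support_pos_prob:
  fixes \<xi> :: "'a \<Rightarrow> 'b::metric_space"
  assumes supp: "full_support M S \<xi>" and "w \<in> S" "r > 0"
  shows "pos_prob_in M (rv_sigma M \<xi>) {\<omega>\<in>space M. dist (\<xi> \<omega>) w < r}"
proof -
  define E where "E = {\<omega>\<in>space M. \<xi> \<omega> \<in> ball w r}"
  have "\<xi> -` ball w r \<inter> space M \<in> rv_sigma M \<xi>"
    unfolding rv_sigma_def by (rule in_vimage_algebra) simp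
  moreover have "\<xi> -` ball w r \<inter> space M = E" by (auto simp: E_def)
  moreover have "w \<in> ball w r \<inter> S"
    using \<open>w \<in> S\<close> \<open>r > 0\<close> by simp
  then have "measure M E > 0"
    using supp unfolding full_support_def E_def by (metis open_ball empty_iff)
  moreover have "E \<subseteq> {\<omega>\<in>space M. dist (\<xi> \<omega>) w < r}"
    by (auto simp: E_def dist_commute)
  ultimately show ?thesis
    unfolding pos_prob_in_def by auto
qed

lemma pos_prob_Linf_dist_less:
  assumes E: "pos_prob_in M (sets M) E" "E \<subseteq> space M" and e: "e1 + e2 < \<epsilon>"
    and F: "\<And>\<omega> x y. \<omega> \<in> E \<Longrightarrow> x \<in> X \<Longrightarrow> y \<in> Dm \<Longrightarrow> \<bar>F \<omega> x y - A x y\<bar> \<le> e1"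
    and A: "\<And>x y. x \<in> X \<Longrightarrow> y \<in> Dm \<Longrightarrow> \<bar>A x y - q x y\<bar> \<le> e2"
  shows "pos_prob_in M (sets M) {\<omega>\<in>space M. Linf_dist X (F \<omega>) q < ereal \<epsilon>}"
  using E(1)
proof (rule pos_prob_in_mono, safe)
  fix \<omega> assume "\<omega> \<in> E"
  then show "\<omega> \<in> space M" using E(2) by blast
  have "\<bar>F \<omega> x y - q x y\<bar> \<le> e1 + e2" if "x \<in> X" "y \<in> Dm" for x y
    using F[OF \<open>\<omega> \<in> E\<close> that] A[OF that] abs_triangle_ineq[of "F \<omega> x y - A x y" "A x y - q x y"] by simp
  then have "Linf_dist X (F \<omega>) q \<le> ereal (e1 + e2)"
    by (rule Linf_dist_le)
  also have "\<dots> < ereal \<epsilon>" using e by simp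
  finally show "Linf_dist X (F \<omega>) q < ereal \<epsilon>" .
qed

section \<open>Weights depending on the covariate\<close>

lemma stick_mixture_near_finite_mixture:
  fixes V c :: "nat \<Rightarrow> real" and \<Theta> \<xi> :: "nat \<Rightarrow> real^'m" and y :: "real^'m"
  assumes V: "\<And>j. 0 \<le> V j \<and> V j \<le> 1" and \<Theta>: "\<And>j. \<Theta> j \<in> Dm0" and y: "y \<in> Dm"
    and c_pos: "\<And>l. l < L \<Longrightarrow> c l > 0" and c_sum: "(\<Sum>l<L. c l) = 1"
    and near: "\<And>j. j < L \<Longrightarrow> bern_dens (Suc n) (\<Theta> j) = bern_dens (Suc n) (\<xi> j)"
    and close: "\<And>j. j < L \<Longrightarrow> \<bar>V j - stick_fractions L c j\<bar> \<le> \<eta>"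
  shows "\<bar>(\<Sum>j. stick V j * bern_dens (Suc n) (\<Theta> j) y) - (\<Sum>l<L. c l * bern_dens (Suc n) (\<xi> l) y)\<bar>
     \<le> real L * (real L + 1) * \<eta> * (fact (n + CARD('m)) / fact n)"
proof -
  have "\<bar>(\<Sum>j. stick V j * bern_dens (Suc n) (\<Theta> j) y)
         - (\<Sum>j<L. stick (stick_fractions L c) j * bern_dens (Suc n) (\<Theta> j) y)\<bar>
     \<le> real L * (real L + 1) * \<eta> * (fact (n + CARD('m)) / fact n)"
    using V stick_fractions_bounds[OF c_pos c_sum] prod_one_minus_stick_fractions_eq_0[OF c_pos c_sum]
      close bern_dens_bounded[OF \<Theta> y]
    by (intro stick_mixture_approx) auto
  moreover have "(\<Sum>j<L. stick (stick_fractions L c) j * bern_dens (Suc n) (\<Theta> j) y)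
      = (\<Sum>l<L. c l * bern_dens (Suc n) (\<xi> l) y)"
    by (intro sum.cong refl) (simp add: stick_stick_fractions[OF c_pos c_sum] near)
  ultimately show ?thesis by simp
qed

lemma in_Linf_support_varying_weights:
  fixes M :: "'a measure" and X :: "'x::metric_space set" and q :: "'x \<Rightarrow> real^'m \<Rightarrow> real"
    and kf :: "'a \<Rightarrow> nat" and Vf :: "nat \<Rightarrow> 'a \<Rightarrow> 'x \<Rightarrow> real" and \<Theta>f :: "nat \<Rightarrow> 'a \<Rightarrow> 'x \<Rightarrow> real^'m"
  assumes M: "prob_space M" and X: "compact X" and q: "q \<in> Dtilde X"
    and ind: "indep_ingredients M (nat_sigma M kf) Fw Fa" and k: "cond_iii M kf"
    and V: "\<And>\<omega> j x. \<omega> \<in> space M \<Longrightarrow> x \<in> X \<Longrightarrow> 0 \<le> Vf j \<omega> x \<and> Vf j \<omega> x \<le> 1"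
    and \<Theta>: "\<And>\<omega> j x. \<omega> \<in> space M \<Longrightarrow> x \<in> X \<Longrightarrow> \<Theta>f j \<omega> x \<in> Dm0"
    and weights: "\<And>j g e. continuous_on X g \<Longrightarrow> g ` X \<subseteq> {0..1} \<Longrightarrow> e > 0 \<Longrightarrow>
       pos_prob_in M (Fw j) {\<omega>\<in>space M. \<forall>x\<in>X. \<bar>Vf j \<omega> x - g x\<bar> < e}"
    and atoms: "\<And>j \<xi> r. \<xi> \<in> Dm0 \<Longrightarrow> r > 0 \<Longrightarrow>
       pos_prob_in M (Fa j) {\<omega>\<in>space M. \<forall>x\<in>X. dist (\<Theta>f j \<omega> x) \<xi> < r}"
  shows "in_Linf_support M X (\<lambda>\<omega>. mix_dens (kf \<omega>) (\<lambda>j x. Vf j \<omega> x) (\<lambda>j x. \<Theta>f j \<omega> x)) q"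
  unfolding in_Linf_support_def
proof (intro allI impI)
  fix \<epsilon> :: real assume "\<epsilon> > 0"
  then have "\<epsilon> / 2 > 0" by simp
  obtain L :: nat and \<xi> n c where "L \<ge> 1" and \<xi>: "\<And>l. l < L \<Longrightarrow> \<xi> l \<in> Dm0"
    and near: "\<And>l \<theta>. l < L \<Longrightarrow> dist \<theta> (\<xi> l) < cell_radius CARD('m) n \<Longrightarrow>
      bern_dens (Suc n) \<theta> = bern_dens (Suc n) (\<xi> l)"
    and c_cont: "\<And>l. l < L \<Longrightarrow> continuous_on X (c l)" and c_pos: "\<And>l x. l < L \<Longrightarrow> x \<in> X \<Longrightarrow> c l x > 0"
    and c_sum: "\<And>x. x \<in> X \<Longrightarrow> (\<Sum>l<L. c l x) = 1"
    and approx: "\<And>x y. x \<in> X \<Longrightarrow> y \<in> Dm \<Longrightarrow> \<bar>(\<Sum>l<L. c l x * bern_dens (Suc n) (\<xi> l) y) - q x y\<bar> < \<epsilon> / 2"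
    using Dtilde_finite_mixture_approx[OF q X \<open>\<epsilon> / 2 > 0\<close>] by blast
  define C :: real where "C = fact (n + CARD('m)) / fact n"
  obtain \<eta> where "\<eta> > 0" and \<eta>: "real L * (real L + 1) * C * \<eta> \<le> \<epsilon> / 4"
    using obtain_small_pos[of "\<epsilon> / 4" 1 "real L * (real L + 1) * C"] \<open>\<epsilon> > 0\<close> by auto
  define W where "W j x = stick_fractions L (\<lambda>l. c l x) j" for j x
  have "\<And>j. continuous_on X (W j)" "\<And>j. W j ` X \<subseteq> {0..1}"
    using continuous_on_stick_fractions[of L X c] stick_fractions_bounds[of L "\<lambda>l. c l _"] c_cont c_pos c_sum
    by (auto simp: W_def)
  define E where "E = {\<omega>\<in>space M. kf \<omega> = Suc n}
      \<inter> (\<Inter>j<L. {\<omega>\<in>space M. \<forall>x\<in>X. \<bar>Vf j \<omega> x - W j x\<bar> < \<eta>})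
      \<inter> (\<Inter>j<L. {\<omega>\<in>space M. \<forall>x\<in>X. dist (\<Theta>f j \<omega> x) (\<xi> j) < cell_radius CARD('m) n})"
  show "pos_prob_in M (sets M)
      {\<omega>\<in>space M. Linf_dist X (mix_dens (kf \<omega>) (\<lambda>j x. Vf j \<omega> x) (\<lambda>j x. \<Theta>f j \<omega> x)) q < ereal \<epsilon>}"
  proof (rule pos_prob_Linf_dist_less[of M E "\<epsilon> / 4" "\<epsilon> / 2"])
    show "pos_prob_in M (sets M) E"
      unfolding E_def using cond_iii_pos_prob[OF k] weights \<open>\<eta> > 0\<close> atoms \<xi> cell_radius_pos[of "CARD('m)" n]
        \<open>\<And>j. continuous_on X (W j)\<close> \<open>\<And>j. W j ` X \<subseteq> {0..1}\<close>
      by (intro indep_ingredients_pos_prob[OF M ind]) auto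
    fix \<omega> x and y :: "real^'m" assume "\<omega> \<in> E" "x \<in> X" "y \<in> Dm"
    then have "\<bar>(\<Sum>j. stick (\<lambda>l. Vf l \<omega> x) j * bern_dens (Suc n) (\<Theta>f j \<omega> x) y)
        - (\<Sum>l<L. c l x * bern_dens (Suc n) (\<xi> l) y)\<bar> \<le> real L * (real L + 1) * \<eta> * C"
      unfolding C_def using V \<Theta> c_pos c_sum near
      by (intro stick_mixture_near_finite_mixture) (auto simp: E_def W_def less_imp_le)
    also have "\<dots> \<le> \<epsilon> / 4"
      using \<eta> by (simp add: mult_ac)
    finally show "\<bar>mix_dens (kf \<omega>) (\<lambda>j x. Vf j \<omega> x) (\<lambda>j x. \<Theta>f j \<omega> x) x y
        - (\<Sum>l<L. c l x * bern_dens (Suc n) (\<xi> l) y)\<bar> \<le> \<epsilon> / 4"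
      using \<open>\<omega> \<in> E\<close> by (simp add: mix_dens_def E_def)
  qed (use approx \<open>\<epsilon> > 0\<close> in \<open>auto simp: E_def less_imp_le\<close>)
qed

section \<open>Weights independent of the covariate\<close>

lemma card_int_interval_nat:
  fixes a b :: int
  assumes "0 \<le> a"
  shows "real (card {j::nat. a \<le> int j \<and> int j \<le> b}) = max 0 (real_of_int (b - a + 1))"
proof (cases "a \<le> b")
  case True
  have "{j::nat. a \<le> int j \<and> int j \<le> b} = {nat a..nat b}"
    using assms True by (auto simp: le_nat_iff nat_le_iff)
  then show ?thesis using assms True by simp
next
  case False
  then have e: "{j::nat. a \<le> int j \<and> int j \<le> b} = {}" by auto
  show ?thesis using False by (simp add: e)
qed

definition grid_midpoint :: "nat \<Rightarrow> nat \<Rightarrow> real" where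
  "grid_midpoint N j = (real j + 1/2) / real N"

lemma card_grid_midpoints_between:
  fixes \<alpha> \<beta> :: real
  assumes N: "N \<ge> 1" and a: "0 \<le> \<alpha>" and b: "\<beta> \<le> 1"
  defines "S \<equiv> {j. j < N \<and> \<alpha> \<le> grid_midpoint N j \<and> grid_midpoint N j \<le> \<beta>}"
  shows "real (card S) \<ge> real N * (\<beta> - \<alpha>) - 1" and "real (card S) \<le> max 0 (real N * (\<beta> - \<alpha>) + 1)"
proof -
  have Np: "real N > 0" using N by simp
  define a0 where "a0 = \<lceil>real N * \<alpha> - 1/2\<rceil>"
  define b0 where "b0 = \<lfloor>real N * \<beta> - 1/2\<rfloor>"
  have ab2: "real_of_int a0 \<ge> real N * \<alpha> - 1/2" unfolding a0_def by linarith
  have "real N * \<alpha> \<ge> 0" using a Np by simp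
  then have "real_of_int a0 > -1" using ab2 by linarith
  then have a00: "0 \<le> a0" by simp
  have bN: "b0 \<le> int N - 1"
  proof -
    have "real N * \<beta> - 1/2 \<le> real N - 1/2" using b Np by (simp add: mult_left_le)
    then have "b0 \<le> \<lfloor>real N - 1/2\<rfloor>" unfolding b0_def by (intro floor_mono)
    also have "\<lfloor>real N - 1/2\<rfloor> = int N - 1" by (simp add: floor_eq_iff)
    finally show ?thesis .
  qed
  have Seq: "S = {j::nat. a0 \<le> int j \<and> int j \<le> b0}"
  proof -
    have "\<alpha> \<le> (real j + 1/2) / real N \<longleftrightarrow> a0 \<le> int j" for j
      using Np unfolding a0_def by (simp add: ceiling_le_iff pos_le_divide_eq algebra_simps)
    moreover have "(real j + 1/2) / real N \<le> \<beta> \<longleftrightarrow> int j \<le> b0" for j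
      using Np unfolding b0_def by (simp add: le_floor_iff pos_divide_le_eq algebra_simps)
    moreover have "int j \<le> b0 \<Longrightarrow> j < N" for j using bN by simp
    ultimately show ?thesis unfolding S_def grid_midpoint_def by auto
  qed
  have c: "real (card S) = max 0 (real_of_int (b0 - a0 + 1))" unfolding Seq by (rule card_int_interval_nat[OF a00])
  have ab1: "real_of_int a0 < real N * \<alpha> - 1/2 + 1" unfolding a0_def by linarith
  have bb1: "real_of_int b0 > real N * \<beta> - 1/2 - 1" unfolding b0_def by linarith
  have bb2: "real_of_int b0 \<le> real N * \<beta> - 1/2" unfolding b0_def by linarith
  show "real (card S) \<ge> real N * (\<beta> - \<alpha>) - 1" unfolding c using ab1 bb1 by (simp add: algebra_simps)
  show "real (card S) \<le> max 0 (real N * (\<beta> - \<alpha>) + 1)" unfolding c using ab2 bb2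
    by (simp add: algebra_simps)
qed

lemma card_uncovered_le:
  fixes S :: "nat \<Rightarrow> nat set" and c :: "nat \<Rightarrow> real"
  assumes N: "N \<ge> 1" and S: "\<And>l. l < L \<Longrightarrow> S l \<subseteq> {..<N}"
    and disj: "\<And>l l'. l < L \<Longrightarrow> l' < L \<Longrightarrow> l \<noteq> l' \<Longrightarrow> S l \<inter> S l' = {}"
    and c_sum: "(\<Sum>l<L. c l) = 1" and card: "\<And>l. l < L \<Longrightarrow> c l - e \<le> real (card (S l)) / real N"
  shows "real (card ({..<N} - (\<Union>l<L. S l))) / real N \<le> real L * e"
proof -
  have fin: "finite (S l)" if "l < L" for l
    using S[OF that] finite_subset by blast
  have sub: "(\<Union>l<L. S l) \<subseteq> {..<N}" using S by auto
  then have "card ({..<N} - (\<Union>l<L. S l)) = N - card (\<Union>l<L. S l)" "card (\<Union>l<L. S l) \<le> N"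
    using card_Diff_subset[OF finite_subset[OF sub] sub] card_mono[OF _ sub] by auto
  moreover have "card (\<Union>l<L. S l) = (\<Sum>l<L. card (S l))"
    using fin disj by (intro card_UN_disjoint) auto
  ultimately have "real (card ({..<N} - (\<Union>l<L. S l))) = real N - (\<Sum>l<L. real (card (S l)))"
    by simp
  then have "real (card ({..<N} - (\<Union>l<L. S l))) / real N = 1 - (\<Sum>l<L. real (card (S l)) / real N)"
    using N by (simp add: diff_divide_distrib sum_divide_distrib[symmetric])
  also have "\<dots> \<le> 1 - (\<Sum>l<L. c l - e)"
    using card by (intro diff_left_mono sum_mono) auto
  finally show ?thesis
    using c_sum by (simp add: sum_subtractf)
qed

lemma sum_average_partition_error:
  fixes c D\<xi> D :: "nat \<Rightarrow> real" and S :: "nat \<Rightarrow> nat set"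
  assumes N: "N \<ge> 1" and S: "\<And>l. l < L \<Longrightarrow> S l \<subseteq> {..<N}"
    and disj: "\<And>l l'. l < L \<Longrightarrow> l' < L \<Longrightarrow> l \<noteq> l' \<Longrightarrow> S l \<inter> S l' = {}"
    and c_sum: "(\<Sum>l<L. c l) = 1" and card: "\<And>l. l < L \<Longrightarrow> \<bar>real (card (S l)) / real N - c l\<bar> \<le> e"
    and D\<xi>: "\<And>l. l < L \<Longrightarrow> 0 \<le> D\<xi> l \<and> D\<xi> l \<le> C" and D: "\<And>j. j < N \<Longrightarrow> 0 \<le> D j \<and> D j \<le> C"
    and DS: "\<And>l j. l < L \<Longrightarrow> j \<in> S l \<Longrightarrow> D j = D\<xi> l"
  shows "\<bar>(\<Sum>j<N. D j / real N) - (\<Sum>l<L. c l * D\<xi> l)\<bar> \<le> 2 * real L * e * C"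
proof -
  have "real N > 0" "C \<ge> 0" using N D[of 0] by auto
  define U where "U = {..<N} - (\<Union>l<L. S l)"
  have fin: "finite (S l)" if "l < L" for l
    using S[OF that] finite_subset by blast
  have "(\<Sum>j<N. D j) = (\<Sum>j\<in>(\<Union>l<L. S l). D j) + (\<Sum>j\<in>U. D j)"
    using S fin by (subst sum.subset_diff[of "\<Union>l<L. S l"]) (auto simp: U_def)
  also have "(\<Sum>j\<in>(\<Union>l<L. S l). D j) = (\<Sum>l<L. \<Sum>j\<in>S l. D j)"
    using fin disj by (intro sum.UNION_disjoint) auto
  also have "\<dots> = (\<Sum>l<L. real (card (S l)) * D\<xi> l)"
    using DS by (intro sum.cong refl) simp
  finally have split: "(\<Sum>j<N. D j / real N) - (\<Sum>l<L. c l * D\<xi> l)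
      = (\<Sum>l<L. (real (card (S l)) / real N - c l) * D\<xi> l) + (\<Sum>j\<in>U. D j) / real N"
    by (simp add: sum_divide_distrib[symmetric] add_divide_distrib sum_subtractf left_diff_distrib)
  have "\<bar>\<Sum>l<L. (real (card (S l)) / real N - c l) * D\<xi> l\<bar> \<le> (\<Sum>l<L. e * C)"
  proof (intro order_trans[OF sum_abs] sum_mono)
    fix l assume "l \<in> {..<L}"
    then have "\<bar>real (card (S l)) / real N - c l\<bar> \<le> e" "\<bar>D\<xi> l\<bar> \<le> C"
      using card D\<xi> by auto
    then show "\<bar>(real (card (S l)) / real N - c l) * D\<xi> l\<bar> \<le> e * C"
      unfolding abs_mult by (intro mult_mono) auto
  qed
  moreover have "(\<Sum>j\<in>U. D j) \<le> real (card U) * C" "0 \<le> (\<Sum>j\<in>U. D j)"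
    using D sum_mono[of U D "\<lambda>_. C"] sum_nonneg[of U D] by (auto simp: U_def)
  then have "0 \<le> (\<Sum>j\<in>U. D j) / real N" "(\<Sum>j\<in>U. D j) / real N \<le> real (card U) / real N * C"
    using \<open>real N > 0\<close> by (auto simp: divide_right_mono)
  moreover have "real (card U) / real N \<le> real L * e"
    unfolding U_def
  proof (rule card_uncovered_le[OF N])
    show "c l - e \<le> real (card (S l)) / real N" if "l < L" for l
      using card[OF that] unfolding abs_le_iff by simp
  qed (use S disj c_sum in auto)
  then have "real (card U) / real N * C \<le> real L * e * C"
    using \<open>C \<ge> 0\<close> by (rule mult_right_mono)
  ultimately show ?thesis
    unfolding split using abs_triangle_ineq[of "\<Sum>l<L. (real (card (S l)) / real N - c l) * D\<xi> l" "(\<Sum>j\<in>U. D j) / real N"]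
    by simp
qed

lemma equal_weights_discretisation:
  fixes c D\<xi> D :: "nat \<Rightarrow> real"
  assumes N: "N \<ge> 1" and \<delta>: "\<delta> > 0"
    and c_pos: "\<And>l. l < L \<Longrightarrow> c l > 0" and c_sum: "(\<Sum>l<L. c l) = 1"
    and D\<xi>: "\<And>l. l < L \<Longrightarrow> 0 \<le> D\<xi> l \<and> D\<xi> l \<le> C" and D: "\<And>j. j < N \<Longrightarrow> 0 \<le> D j \<and> D j \<le> C"
    and settled: "\<And>j l. j < N \<Longrightarrow> l < L \<Longrightarrow> (\<Sum>i<l. c i) + \<delta> \<le> grid_midpoint N j \<Longrightarrow>
        grid_midpoint N j \<le> (\<Sum>i<Suc l. c i) \<Longrightarrow> D j = D\<xi> l"
  shows "\<bar>(\<Sum>j<N. D j / real N) - (\<Sum>l<L. c l * D\<xi> l)\<bar> \<le> 2 * real L * (\<delta> + 1 / real N) * C"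
proof (rule sum_average_partition_error[OF N _ _ c_sum _ D\<xi> D])
  define cum where "cum l = (\<Sum>i<l. c i)" for l
  have cum_mono: "cum l \<le> cum l'" if "l \<le> l'" "l' \<le> L" for l l'
    unfolding cum_def using that c_pos by (intro sum_mono2) (auto intro: less_imp_le)
  define S where "S l = {j. j < N \<and> cum l + \<delta> \<le> grid_midpoint N j \<and> grid_midpoint N j \<le> cum (Suc l)}" for l
  show "S l \<subseteq> {..<N}" for l by (auto simp: S_def)
  show "S l \<inter> S l' = {}" if "l < L" "l' < L" "l \<noteq> l'" for l l'
  proof (cases "l < l'")
    case True
    then have "cum (Suc l) \<le> cum l'" using that by (intro cum_mono) auto
    then show ?thesis using \<delta> by (auto simp: S_def)
  next
    case False
    then have "cum (Suc l') \<le> cum l" using that by (intro cum_mono) auto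
    then show ?thesis using \<delta> by (auto simp: S_def)
  qed
  show "D j = D\<xi> l" if "l < L" "j \<in> S l" for l j
    using that settled by (auto simp: S_def cum_def)
  show "\<bar>real (card (S l)) / real N - c l\<bar> \<le> \<delta> + 1 / real N" if "l < L" for l
  proof -
    have "0 \<le> cum l + \<delta>" "cum (Suc l) \<le> 1"
      using cum_mono[of 0 l] cum_mono[of "Suc l" L] c_sum \<delta> that by (auto simp: cum_def)
    from card_grid_midpoints_between[OF N this]
    have "real N * (c l - \<delta>) - 1 \<le> real (card (S l))" "real (card (S l)) \<le> max 0 (real N * (c l - \<delta>) + 1)"
      by (simp_all add: S_def cum_def)
    moreover have "real N > 0" "c l > 0" using N c_pos[OF that] by auto
    ultimately have "real (card (S l)) \<le> real N * c l + 1"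
      using \<delta> by (auto elim!: order_trans intro!: max.boundedI simp: algebra_simps)
    with \<open>real N * (c l - \<delta>) - 1 \<le> real (card (S l))\<close> \<open>real N > 0\<close>
    have lo: "(real N * (c l - \<delta>) - 1) / real N \<le> real (card (S l)) / real N"
      and hi: "real (card (S l)) / real N \<le> (real N * c l + 1) / real N"
      by (simp_all add: divide_right_mono)
    have "(real N * (c l - \<delta>) - 1) / real N = c l - \<delta> - 1 / real N"
      "(real N * c l + 1) / real N = c l + 1 / real N"
      using \<open>real N > 0\<close> by (simp_all add: field_simps)
    with lo hi have "c l - \<delta> - 1 / real N \<le> real (card (S l)) / real N"
      "real (card (S l)) / real N \<le> c l + 1 / real N"
      by simp_all
    then show ?thesis using \<delta> by (simp add: abs_le_iff)
  qed
qed

text \<open>With equal weights, atom \<open>j\<close> of \<open>N\<close> is moved continuously in \<open>x\<close> to the atom \<open>\<xi>\<^sub>l\<close> whose interval of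
  cumulative weights contains \<open>grid_midpoint N j\<close>. \<open>smooth_index L \<delta> cum s\<close> is a continuous count of the
  cumulative weights \<open>cum 1, \<dots>, cum (L - 1)\<close> below \<open>s\<close>, exact once \<open>s\<close> lies \<open>\<delta>\<close> inside an interval;
  \<open>atom_path L \<xi>\<close> interpolates linearly between \<open>\<xi> 0, \<dots>, \<xi> (L - 1)\<close>, passing through \<open>\<xi> l\<close> at \<open>l\<close>.\<close>

definition clamp01 :: "real \<Rightarrow> real" where
  "clamp01 t = max 0 (min 1 t)"

definition hat :: "real \<Rightarrow> real" where
  "hat t = max 0 (1 - \<bar>t\<bar>)"

definition smooth_index :: "nat \<Rightarrow> real \<Rightarrow> (nat \<Rightarrow> real) \<Rightarrow> real \<Rightarrow> real" where
  "smooth_index L \<delta> cum s = (\<Sum>i\<in>{1..<L}. clamp01 ((s - cum i) / \<delta>))"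

definition atom_path :: "nat \<Rightarrow> (nat \<Rightarrow> real^'m) \<Rightarrow> real \<Rightarrow> real^'m" where
  "atom_path L \<xi> u = (1 / (\<Sum>l<L. hat (u - real l))) *\<^sub>R (\<Sum>l<L. hat (u - real l) *\<^sub>R \<xi> l)"

lemma smooth_index_bounds:
  assumes "L \<ge> 1"
  shows "0 \<le> smooth_index L \<delta> cum s" "smooth_index L \<delta> cum s \<le> real L - 1"
proof -
  show "0 \<le> smooth_index L \<delta> cum s" unfolding smooth_index_def clamp01_def by (intro sum_nonneg) auto
  have "smooth_index L \<delta> cum s \<le> (\<Sum>i\<in>{1..<L}. 1)" unfolding smooth_index_def clamp01_def by (intro sum_mono) auto
  also have "\<dots> = real L - 1" using assms by simp
  finally show "smooth_index L \<delta> cum s \<le> real L - 1" .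
qed

lemma hat_pos_near:
  assumes "0 \<le> u" "u \<le> real L - 1"
  obtains l where "l < L" "hat (u - real l) > 0"
proof
  have "real (nat \<lfloor>u\<rfloor>) = of_int \<lfloor>u\<rfloor>" using assms by simp
  then show "hat (u - real (nat \<lfloor>u\<rfloor>)) > 0" "nat \<lfloor>u\<rfloor> < L"
    using assms by (simp_all add: hat_def) linarith+
qed

lemma hat_nonneg: "hat t \<ge> 0"
  by (simp add: hat_def)

lemma sum_hat_pos:
  assumes "0 \<le> u" "u \<le> real L - 1"
  shows "(\<Sum>l<L. hat (u - real l)) > 0"
proof -
  obtain l where "l < L" "hat (u - real l) > 0" using hat_pos_near[OF assms] .
  then show ?thesis
    using member_le_sum[of l "{..<L}" "\<lambda>l. hat (u - real l)"] hat_nonneg by simp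
qed

lemma atom_path_Dm0:
  fixes \<xi> :: "nat \<Rightarrow> real^'m"
  assumes \<xi>: "\<And>l. l < L \<Longrightarrow> \<xi> l \<in> Dm0" and u: "0 \<le> u" "u \<le> real L - 1"
  shows "atom_path L \<xi> u \<in> Dm0"
proof -
  define H where "H = (\<Sum>l<L. hat (u - real l))"
  have "H > 0" unfolding H_def by (rule sum_hat_pos[OF u])
  obtain l0 where "l0 < L" "hat (u - real l0) > 0" using hat_pos_near[OF u] .
  have comp: "atom_path L \<xi> u $ i = (\<Sum>l<L. hat (u - real l) * \<xi> l $ i) / H" for i
    unfolding atom_path_def H_def[symmetric] by (simp add: sum_component)
  have "atom_path L \<xi> u $ i > 0" for i
  proof -
    have "0 < hat (u - real l0) * \<xi> l0 $ i"
      using \<open>hat (u - real l0) > 0\<close> \<xi>[OF \<open>l0 < L\<close>] by (simp add: Dm0_def)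
    also have "\<dots> \<le> (\<Sum>l<L. hat (u - real l) * \<xi> l $ i)"
      using \<open>l0 < L\<close> \<xi> hat_nonneg by (intro member_le_sum) (auto simp: Dm0_def mem_Dm)
    finally show ?thesis unfolding comp using \<open>H > 0\<close> by simp
  qed
  moreover have "(\<Sum>i\<in>UNIV. atom_path L \<xi> u $ i) = (\<Sum>l<L. hat (u - real l) * (\<Sum>i\<in>UNIV. \<xi> l $ i)) / H"
    unfolding comp by (simp add: sum_divide_distrib[symmetric] sum_distrib_left sum.swap[of _ UNIV])
  moreover have "\<dots> \<le> (\<Sum>l<L. hat (u - real l) * 1) / H"
    using \<open>H > 0\<close> \<xi> hat_nonneg by (intro divide_right_mono sum_mono mult_left_mono) (auto simp: Dm0_def mem_Dm)
  moreover have "\<dots> = 1" using \<open>H > 0\<close> by (simp add: H_def)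
  ultimately show ?thesis unfolding Dm0_def mem_Dm by (auto intro: less_imp_le)
qed

lemma atom_path_of_nat:
  assumes "l < L"
  shows "atom_path L \<xi> (real l) = \<xi> l"
proof -
  have h: "hat (real l - real l') = (if l' = l then 1 else 0)" for l'
  proof (cases "l' = l")
    case False
    then have "\<bar>real l - real l'\<bar> \<ge> 1" by linarith
    then show ?thesis using False by (simp add: hat_def)
  qed (simp add: hat_def)
  have s1: "(\<Sum>l'<L. hat (real l - real l') *\<^sub>R \<xi> l') = (\<Sum>l'<L. if l' = l then \<xi> l' else 0)"
    by (intro sum.cong refl) (simp add: h)
  have s2: "(\<Sum>l'<L. hat (real l - real l')) = (\<Sum>l'<L. if l' = l then 1 else 0)"
    by (intro sum.cong refl) (simp add: h)
  show ?thesis unfolding atom_path_def s1 s2 using assms by (simp add: sum.delta')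
qed

lemma smooth_index_settled:
  assumes \<delta>: "\<delta> > 0" and mono: "\<And>i i'. i \<le> i' \<Longrightarrow> i' \<le> L \<Longrightarrow> cum i \<le> cum i'"
    and l: "l < L" and s1: "cum l + \<delta> \<le> s" and s2: "s \<le> cum (Suc l)"
  shows "smooth_index L \<delta> cum s = real l"
proof -
  have "smooth_index L \<delta> cum s = (\<Sum>i\<in>{1..<L}. if i \<le> l then 1 else 0)"
    unfolding smooth_index_def
  proof (intro sum.cong refl)
    fix i assume i: "i \<in> {1..<L}"
    show "clamp01 ((s - cum i) / \<delta>) = (if i \<le> l then 1 else 0)"
    proof (cases "i \<le> l")
      case True
      then have "cum i \<le> cum l" using mono l by simp
      then have "(s - cum i) / \<delta> \<ge> 1" using s1 \<delta> by (simp add: le_divide_eq)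
      then show ?thesis using True by (simp add: clamp01_def)
    next
      case False
      then have "cum (Suc l) \<le> cum i" using mono i by simp
      then have "(s - cum i) / \<delta> \<le> 0" using s2 \<delta> by (simp add: divide_le_0_iff)
      then show ?thesis using False by (simp add: clamp01_def)
    qed
  qed
  also have "\<dots> = (\<Sum>i\<in>{i\<in>{1..<L}. i \<le> l}. 1)" by (rule sum.inter_filter[symmetric]) simp
  also have "{i\<in>{1..<L}. i \<le> l} = {1..l}" using l by auto
  finally show ?thesis by simp
qed

lemma continuous_on_atom_path_smooth_index:
  fixes \<xi> :: "nat \<Rightarrow> real^'m" and cum :: "nat \<Rightarrow> 'x::topological_space \<Rightarrow> real"
  assumes L: "L \<ge> 1" and cc: "\<And>i. i < L \<Longrightarrow> continuous_on X (cum i)" and \<delta>: "\<delta> \<noteq> 0"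
  shows "continuous_on X (\<lambda>x. atom_path L \<xi> (smooth_index L \<delta> (\<lambda>i. cum i x) s))"
proof -
  have cQ: "continuous_on X (\<lambda>x. smooth_index L \<delta> (\<lambda>i. cum i x) s)"
    unfolding smooth_index_def clamp01_def by (intro continuous_intros) (use \<delta> cc in auto)
  have "(\<Sum>l<L. hat (u - real l)) \<noteq> 0" if "u \<in> {0..real L - 1}" for u
    using sum_hat_pos[of u L] that by auto
  then have cg: "continuous_on {0..real L - 1} (atom_path L \<xi>)"
    unfolding atom_path_def hat_def by (intro continuous_intros) auto
  show ?thesis
    by (rule continuous_on_compose2[OF cg cQ]) (use smooth_index_bounds[OF L] in auto)
qed

lemma atom_path_smooth_index_settled:
  fixes c :: "nat \<Rightarrow> real"
  assumes \<delta>: "\<delta> > 0" and c_pos: "\<And>l. l < L \<Longrightarrow> c l > 0" and "l < L"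
    and "(\<Sum>i<l. c i) + \<delta> \<le> s" "s \<le> (\<Sum>i<Suc l. c i)"
  shows "atom_path L \<xi> (smooth_index L \<delta> (\<lambda>i. \<Sum>i'<i. c i') s) = \<xi> l"
proof -
  have "smooth_index L \<delta> (\<lambda>i. \<Sum>i'<i. c i') s = real l"
  proof (rule smooth_index_settled[OF \<delta> _ \<open>l < L\<close>])
    show "(\<Sum>i'<i. c i') \<le> (\<Sum>i'<j. c i')" if "i \<le> j" "j \<le> L" for i j
      using that c_pos by (intro sum_mono2) (auto intro: less_imp_le)
  qed (use assms in simp_all)
  then show ?thesis
    using atom_path_of_nat[OF \<open>l < L\<close>] by simp
qed

definition route :: "nat \<Rightarrow> (nat \<Rightarrow> real^'m) \<Rightarrow> real \<Rightarrow> (nat \<Rightarrow> real) \<Rightarrow> nat \<Rightarrow> nat \<Rightarrow> real^'m" where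
  "route L \<xi> \<delta> c N j = atom_path L \<xi> (smooth_index L \<delta> (\<lambda>i. \<Sum>i'<i. c i') (grid_midpoint N j))"

lemma route_Dm0:
  assumes "L \<ge> 1" "\<And>l. l < L \<Longrightarrow> \<xi> l \<in> Dm0"
  shows "route L \<xi> \<delta> c N j \<in> Dm0"
  unfolding route_def using assms smooth_index_bounds[OF assms(1)] by (intro atom_path_Dm0) auto

lemma continuous_on_route:
  fixes c :: "nat \<Rightarrow> 'x::topological_space \<Rightarrow> real"
  assumes "L \<ge> 1" "\<delta> \<noteq> 0" "\<And>l. l < L \<Longrightarrow> continuous_on X (c l)"
  shows "continuous_on X (\<lambda>x. route L \<xi> \<delta> (\<lambda>l. c l x) N j)"
  unfolding route_def using assms by (intro continuous_on_atom_path_smooth_index continuous_on_sum) auto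

lemma stick_equal_fractions:
  assumes "j < N"
  shows "stick (stick_fractions N (\<lambda>_. 1 / real N)) j = 1 / real N"
  using assms stick_stick_fractions[of N "\<lambda>_. 1 / real N" j] by simp

lemma equal_weights_mixture_error:
  fixes V D c D\<xi> :: "nat \<Rightarrow> real"
  assumes N: "N \<ge> 1" and \<delta>: "\<delta> > 0"
    and c_pos: "\<And>l. l < L \<Longrightarrow> c l > 0" and c_sum: "(\<Sum>l<L. c l) = 1"
    and V: "\<And>j. 0 \<le> V j \<and> V j \<le> 1"
    and close: "\<And>j. j < N \<Longrightarrow> \<bar>V j - stick_fractions N (\<lambda>_. 1 / real N) j\<bar> \<le> \<eta>"
    and D\<xi>: "\<And>l. l < L \<Longrightarrow> 0 \<le> D\<xi> l \<and> D\<xi> l \<le> C" and D: "\<And>j. 0 \<le> D j \<and> D j \<le> C"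
    and settled: "\<And>j l. j < N \<Longrightarrow> l < L \<Longrightarrow> (\<Sum>i<l. c i) + \<delta> \<le> grid_midpoint N j \<Longrightarrow>
        grid_midpoint N j \<le> (\<Sum>i<Suc l. c i) \<Longrightarrow> D j = D\<xi> l"
  shows "\<bar>(\<Sum>j. stick V j * D j) - (\<Sum>l<L. c l * D\<xi> l)\<bar>
           \<le> real N * (real N + 1) * \<eta> * C + 2 * real L * (\<delta> + 1 / real N) * C"
proof -
  let ?W = "stick_fractions N (\<lambda>_. 1 / real N)"
  have pos: "\<And>l. l < N \<Longrightarrow> 1 / real N > 0" and sum: "(\<Sum>l<N. 1 / real N) = 1"
    using N by auto
  have "\<bar>(\<Sum>j. stick V j * D j) - (\<Sum>j<N. stick ?W j * D j)\<bar> \<le> real N * (real N + 1) * \<eta> * C"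
    using V stick_fractions_bounds[OF pos sum] prod_one_minus_stick_fractions_eq_0[OF pos sum] close D
    by (intro stick_mixture_approx) auto
  moreover have "(\<Sum>j<N. stick ?W j * D j) = (\<Sum>j<N. D j / real N)"
    by (intro sum.cong refl) (simp add: stick_equal_fractions)
  moreover have "\<bar>(\<Sum>j<N. D j / real N) - (\<Sum>l<L. c l * D\<xi> l)\<bar> \<le> 2 * real L * (\<delta> + 1 / real N) * C"
    by (rule equal_weights_discretisation[OF N \<delta> c_pos c_sum D\<xi>]) (use D settled in auto)
  ultimately show ?thesis
    using abs_triangle_ineq[of "(\<Sum>j. stick V j * D j) - (\<Sum>j<N. D j / real N)"
        "(\<Sum>j<N. D j / real N) - (\<Sum>l<L. c l * D\<xi> l)"]
    by simp
qed

lemma routed_mixture_error: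
  fixes V c :: "nat \<Rightarrow> real" and \<Theta> \<xi> :: "nat \<Rightarrow> real^'m" and y :: "real^'m"
  assumes N: "N \<ge> 1" and \<delta>: "\<delta> > 0"
    and c_pos: "\<And>l. l < L \<Longrightarrow> c l > 0" and c_sum: "(\<Sum>l<L. c l) = 1"
    and V: "\<And>j. 0 \<le> V j \<and> V j \<le> 1"
    and close: "\<And>j. j < N \<Longrightarrow> \<bar>V j - stick_fractions N (\<lambda>_. 1 / real N) j\<bar> \<le> \<eta>"
    and \<Theta>: "\<And>j. \<Theta> j \<in> Dm0" and \<xi>: "\<And>l. l < L \<Longrightarrow> \<xi> l \<in> Dm0" and y: "y \<in> Dm"
    and near: "\<And>l \<theta>. l < L \<Longrightarrow> dist \<theta> (\<xi> l) < cell_radius CARD('m) n \<Longrightarrow>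
      bern_dens (Suc n) \<theta> = bern_dens (Suc n) (\<xi> l)"
    and routed: "\<And>j. j < N \<Longrightarrow> dist (\<Theta> j) (route L \<xi> \<delta> c N j) < cell_radius CARD('m) n"
  shows "\<bar>(\<Sum>j. stick V j * bern_dens (Suc n) (\<Theta> j) y) - (\<Sum>l<L. c l * bern_dens (Suc n) (\<xi> l) y)\<bar>
     \<le> real N * (real N + 1) * \<eta> * (fact (n + CARD('m)) / fact n)
        + 2 * real L * (\<delta> + 1 / real N) * (fact (n + CARD('m)) / fact n)"
proof (rule equal_weights_mixture_error[OF N \<delta> c_pos c_sum V close])
  fix j l assume "j < N" "l < L" "(\<Sum>i<l. c i) + \<delta> \<le> grid_midpoint N j" "grid_midpoint N j \<le> (\<Sum>i<Suc l. c i)"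
  then have "route L \<xi> \<delta> c N j = \<xi> l"
    unfolding route_def using \<delta> c_pos by (intro atom_path_smooth_index_settled) auto
  then show "bern_dens (Suc n) (\<Theta> j) y = bern_dens (Suc n) (\<xi> l) y"
    using near \<open>l < L\<close> routed[OF \<open>j < N\<close>] by simp
qed (use \<Theta> \<xi> y bern_dens_bounded[of _ y n] in auto)

lemma obtain_discretisation_parameters:
  fixes C \<epsilon> :: real and L :: nat
  assumes "\<epsilon> > 0" "C \<ge> 0"
  obtains \<delta> N \<eta> where "\<delta> > 0" "N \<ge> 1" "\<eta> > 0"
    "real N * (real N + 1) * \<eta> * C + 2 * real L * (\<delta> + 1 / real N) * C \<le> \<epsilon>"
proof -
  obtain \<delta> where "\<delta> > 0" and \<delta>: "4 * real L * C * \<delta> \<le> \<epsilon> / 2"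
    using obtain_small_pos[of "\<epsilon> / 2" 1 "4 * real L * C"] assms by auto
  obtain N :: nat where "N > 0" "inverse (real N) < \<delta>"
    using ex_inverse_of_nat_less[OF \<open>\<delta> > 0\<close>] by blast
  then have "N \<ge> 1" "1 / real N \<le> \<delta>" by (auto simp: field_simps)
  obtain \<eta> where "\<eta> > 0" and \<eta>: "real N * (real N + 1) * C * \<eta> \<le> \<epsilon> / 2"
    using obtain_small_pos[of "\<epsilon> / 2" 1 "real N * (real N + 1) * C"] assms by auto
  have "2 * real L * (\<delta> + 1 / real N) * C \<le> 2 * real L * (2 * \<delta>) * C"
    using \<open>1 / real N \<le> \<delta>\<close> assms by (intro mult_right_mono mult_left_mono) auto
  then show ?thesis
    using that[OF \<open>\<delta> > 0\<close> \<open>N \<ge> 1\<close> \<open>\<eta> > 0\<close>] \<delta> \<eta> by (simp add: algebra_simps)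
qed

lemma in_Linf_support_fixed_weights:
  fixes M :: "'a measure" and X :: "'x::metric_space set" and q :: "'x \<Rightarrow> real^'m \<Rightarrow> real"
    and kf :: "'a \<Rightarrow> nat" and vw :: "nat \<Rightarrow> 'a \<Rightarrow> real" and \<Theta>f :: "nat \<Rightarrow> 'a \<Rightarrow> 'x \<Rightarrow> real^'m"
  assumes M: "prob_space M" and X: "compact X" and q: "q \<in> Dtilde X"
    and ind: "indep_ingredients M (nat_sigma M kf) Fw Fa" and k: "cond_iii M kf"
    and V: "\<And>\<omega> j. \<omega> \<in> space M \<Longrightarrow> 0 \<le> vw j \<omega> \<and> vw j \<omega> \<le> 1"
    and \<Theta>: "\<And>\<omega> j x. \<omega> \<in> space M \<Longrightarrow> x \<in> X \<Longrightarrow> \<Theta>f j \<omega> x \<in> Dm0"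
    and weights: "\<And>j w e. w \<in> {0..1} \<Longrightarrow> e > 0 \<Longrightarrow> pos_prob_in M (Fw j) {\<omega>\<in>space M. \<bar>vw j \<omega> - w\<bar> < e}"
    and atoms: "\<And>j g r. continuous_on X g \<Longrightarrow> g ` X \<subseteq> Dm0 \<Longrightarrow> r > 0 \<Longrightarrow>
       pos_prob_in M (Fa j) {\<omega>\<in>space M. \<forall>x\<in>X. dist (\<Theta>f j \<omega> x) (g x) < r}"
  shows "in_Linf_support M X (\<lambda>\<omega>. mix_dens (kf \<omega>) (\<lambda>j x. vw j \<omega>) (\<lambda>j x. \<Theta>f j \<omega> x)) q"
  unfolding in_Linf_support_def
proof (intro allI impI)
  fix \<epsilon> :: real assume "\<epsilon> > 0"
  then have "\<epsilon> / 4 > 0" by simp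
  obtain L :: nat and \<xi> n c where "L \<ge> 1" and \<xi>: "\<And>l. l < L \<Longrightarrow> \<xi> l \<in> Dm0"
    and near: "\<And>l \<theta>. l < L \<Longrightarrow> dist \<theta> (\<xi> l) < cell_radius CARD('m) n \<Longrightarrow>
      bern_dens (Suc n) \<theta> = bern_dens (Suc n) (\<xi> l)"
    and c_cont: "\<And>l. l < L \<Longrightarrow> continuous_on X (c l)" and c_pos: "\<And>l x. l < L \<Longrightarrow> x \<in> X \<Longrightarrow> c l x > 0"
    and c_sum: "\<And>x. x \<in> X \<Longrightarrow> (\<Sum>l<L. c l x) = 1"
    and approx: "\<And>x y. x \<in> X \<Longrightarrow> y \<in> Dm \<Longrightarrow> \<bar>(\<Sum>l<L. c l x * bern_dens (Suc n) (\<xi> l) y) - q x y\<bar> < \<epsilon> / 4"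
    using Dtilde_finite_mixture_approx[OF q X \<open>\<epsilon> / 4 > 0\<close>] by blast
  define C :: real where "C = fact (n + CARD('m)) / fact n"
  obtain \<delta> N \<eta> where "\<delta> > 0" "N \<ge> 1" "\<eta> > 0"
    and budget: "real N * (real N + 1) * \<eta> * C + 2 * real L * (\<delta> + 1 / real N) * C \<le> \<epsilon> / 2"
    using obtain_discretisation_parameters[of "\<epsilon> / 2" C L] \<open>\<epsilon> > 0\<close> by (auto simp: C_def)
  define W where "W = stick_fractions N (\<lambda>_. 1 / real N)"
  define E where "E = {\<omega>\<in>space M. kf \<omega> = Suc n}
      \<inter> (\<Inter>j<N. {\<omega>\<in>space M. \<bar>vw j \<omega> - W j\<bar> < \<eta>})
      \<inter> (\<Inter>j<N. {\<omega>\<in>space M. \<forall>x\<in>X.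
            dist (\<Theta>f j \<omega> x) (route L \<xi> \<delta> (\<lambda>l. c l x) N j) < cell_radius CARD('m) n})"
  show "pos_prob_in M (sets M)
      {\<omega>\<in>space M. Linf_dist X (mix_dens (kf \<omega>) (\<lambda>j x. vw j \<omega>) (\<lambda>j x. \<Theta>f j \<omega> x)) q < ereal \<epsilon>}"
  proof (rule pos_prob_Linf_dist_less[of M E "\<epsilon> / 2" "\<epsilon> / 4"])
    have "W j \<in> {0..1}" for j
      using stick_fractions_bounds[of N "\<lambda>_. 1 / real N" j] \<open>N \<ge> 1\<close> by (simp add: W_def)
    moreover have "pos_prob_in M (Fa j) {\<omega>\<in>space M. \<forall>x\<in>X.
        dist (\<Theta>f j \<omega> x) (route L \<xi> \<delta> (\<lambda>l. c l x) N j) < cell_radius CARD('m) n}" for j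
      using \<open>L \<ge> 1\<close> \<open>\<delta> > 0\<close> c_cont \<xi>
      by (intro atoms continuous_on_route cell_radius_pos) (auto intro: route_Dm0)
    ultimately show "pos_prob_in M (sets M) E"
      unfolding E_def using cond_iii_pos_prob[OF k] weights \<open>\<eta> > 0\<close>
      by (intro indep_ingredients_pos_prob[OF M ind]) auto
    fix \<omega> x and y :: "real^'m" assume "\<omega> \<in> E" "x \<in> X" "y \<in> Dm"
    then have "\<bar>(\<Sum>j. stick (\<lambda>l. vw l \<omega>) j * bern_dens (Suc n) (\<Theta>f j \<omega> x) y)
        - (\<Sum>l<L. c l x * bern_dens (Suc n) (\<xi> l) y)\<bar>
        \<le> real N * (real N + 1) * \<eta> * C + 2 * real L * (\<delta> + 1 / real N) * C"
      unfolding C_def using c_pos c_sum V \<Theta> \<xi> near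
      by (intro routed_mixture_error[OF \<open>N \<ge> 1\<close> \<open>\<delta> > 0\<close>]) (auto simp: E_def W_def less_imp_le)
    with budget show "\<bar>mix_dens (kf \<omega>) (\<lambda>j x. vw j \<omega>) (\<lambda>j x. \<Theta>f j \<omega> x) x y
        - (\<Sum>l<L. c l x * bern_dens (Suc n) (\<xi> l) y)\<bar> \<le> \<epsilon> / 2"
      using \<open>\<omega> \<in> E\<close> by (simp add: mix_dens_def E_def)
  qed (use approx \<open>\<epsilon> > 0\<close> in \<open>auto simp: E_def less_imp_le\<close>)
qed

lemma V_family_bounds: "V_family X v \<Longrightarrow> 0 \<le> v x a \<and> v x a \<le> 1"
  unfolding V_family_def by (auto simp: image_subset_iff)

lemma H_family_Dm0: "H_family X h \<Longrightarrow> h x b \<in> Dm0"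
  unfolding H_family_def by (auto simp: image_subset_iff)

lemma in_Linf_support_DMBPP:
  fixes X :: "'x::metric_space set" and h :: "'x \<Rightarrow> real^'m \<Rightarrow> real^'m"
  assumes "prob_space M" "compact X" "q \<in> Dtilde X" "V_family X v" "H_family X h"
    "indep_ingredients M (nat_sigma M k) (\<lambda>j. proc_sigma M X (\<eta> j)) (\<lambda>j. proc_sigma M X (z j))"
    "cond_i M X z h" "cond_ii M X \<eta> v" "cond_iii M k"
  shows "in_Linf_support M X (\<lambda>\<omega>. mix_dens (k \<omega>) (\<lambda>j x. v x (\<eta> j \<omega> x)) (\<lambda>j x. h x (z j \<omega> x))) q"
proof (rule in_Linf_support_varying_weights[OF assms(1-3,6,9)])
  fix j and \<xi> :: "real^'m" and r :: real assume "\<xi> \<in> Dm0" "r > 0"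
  then show "pos_prob_in M (proc_sigma M X (z j)) {\<omega>\<in>space M. \<forall>x\<in>X. dist (h x (z j \<omega> x)) \<xi> < r}"
    using cond_i_pos_prob[OF assms(7), of "\<lambda>_. \<xi>"] by auto
qed (use assms V_family_bounds[OF assms(4)] in \<open>auto intro: cond_ii_pos_prob H_family_Dm0\<close>)

lemma in_Linf_support_theta_DMBPP:
  fixes X :: "'x::metric_space set" and \<theta> :: "nat \<Rightarrow> 'a \<Rightarrow> real^'m"
  assumes "prob_space M" "compact X" "q \<in> Dtilde X" "iid_rvs M Dm0 \<theta>" "V_family X v"
    "indep_ingredients M (nat_sigma M k) (\<lambda>j. proc_sigma M X (\<eta> j)) (\<lambda>j. rv_sigma M (\<theta> j))"
    "cond_ii M X \<eta> v" "cond_iii M k" "\<forall>j. full_support M Dm0 (\<theta> j)"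
  shows "in_Linf_support M X (\<lambda>\<omega>. mix_dens (k \<omega>) (\<lambda>j x. v x (\<eta> j \<omega> x)) (\<lambda>j x. \<theta> j \<omega>)) q"
proof (rule in_Linf_support_varying_weights[OF assms(1-3,6,8)])
  fix j and \<xi> :: "real^'m" and r :: real assume "\<xi> \<in> Dm0" "r > 0"
  then show "pos_prob_in M (rv_sigma M (\<theta> j)) {\<omega>\<in>space M. \<forall>x\<in>X. dist (\<theta> j \<omega>) \<xi> < r}"
    using full_support_pos_prob[of M Dm0 "\<theta> j" \<xi> r] assms(9) by (auto elim: pos_prob_in_mono)
qed (use assms V_family_bounds[OF assms(5)] in \<open>auto intro: cond_ii_pos_prob simp: iid_rvs_def\<close>)

lemma in_Linf_support_w_DMBPP:
  fixes X :: "'x::metric_space set"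
  assumes "prob_space M" "compact X" "q \<in> Dtilde X" "iid_rvs M {0..1} vw" "H_family X h"
    "indep_ingredients M (nat_sigma M k) (\<lambda>j. rv_sigma M (vw j)) (\<lambda>j. proc_sigma M X (z j))"
    "cond_i M X z h" "cond_iii M k" "\<forall>j. full_support M {0..1} (vw j)"
  shows "in_Linf_support M X (\<lambda>\<omega>. mix_dens (k \<omega>) (\<lambda>j x. vw j \<omega>) (\<lambda>j x. h x (z j \<omega> x))) q"
proof (rule in_Linf_support_fixed_weights[OF assms(1-3,6,8)])
  fix j and w e :: real assume "w \<in> {0..1}" "e > 0"
  then show "pos_prob_in M (rv_sigma M (vw j)) {\<omega>\<in>space M. \<bar>vw j \<omega> - w\<bar> < e}"
    using full_support_pos_prob[of M "{0..1}" "vw j" w e] assms(9) by (simp add: dist_real_def)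
qed (use assms in \<open>auto intro: cond_i_pos_prob H_family_Dm0 simp: iid_rvs_def\<close>)

theorem theorem3:
  fixes M :: "'a measure" and X :: "(real^'p) set"
    and k :: "'a \<Rightarrow> nat"
    and \<eta> :: "nat \<Rightarrow> 'a \<Rightarrow> real^'p \<Rightarrow> real"
    and z :: "nat \<Rightarrow> 'a \<Rightarrow> real^'p \<Rightarrow> real^'m"
    and v :: "real^'p \<Rightarrow> real \<Rightarrow> real"
    and h :: "real^'p \<Rightarrow> real^'m \<Rightarrow> real^'m"
    and vw :: "nat \<Rightarrow> 'a \<Rightarrow> real"
    and \<theta> :: "nat \<Rightarrow> 'a \<Rightarrow> real^'m"
  assumes "prob_space M" and "compact X"
  shows
   \<comment> \<open>DMBPP(lambda, Psi_eta, Psi_z, V, H)\<close>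
   "(nat_rv M k \<and> iid_procs M X \<eta> \<and> iid_procs M X z \<and> V_family X v \<and> H_family X h \<and>
     indep_ingredients M (nat_sigma M k) (\<lambda>j. proc_sigma M X (\<eta> j)) (\<lambda>j. proc_sigma M X (z j)) \<and>
     cond_i M X z h \<and> cond_ii M X \<eta> v \<and> cond_iii M k
     \<longrightarrow> (\<forall>q\<in>Dtilde X. in_Linf_support M X
            (\<lambda>\<omega>. mix_dens (k \<omega>) (\<lambda>j x. v x (\<eta> j \<omega> x)) (\<lambda>j x. h x (z j \<omega> x))) q))
    \<and>
   \<comment> \<open>theta-DMBPP(lambda, Psi_eta, V, Psi_theta)\<close>
    (nat_rv M k \<and> iid_procs M X \<eta> \<and> iid_rvs M Dm0 \<theta> \<and> V_family X v \<and>
     indep_ingredients M (nat_sigma M k) (\<lambda>j. proc_sigma M X (\<eta> j)) (\<lambda>j. rv_sigma M (\<theta> j)) \<and>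
     cond_ii M X \<eta> v \<and> cond_iii M k \<and> (\<forall>j. full_support M Dm0 (\<theta> j))
     \<longrightarrow> (\<forall>q\<in>Dtilde X. in_Linf_support M X
            (\<lambda>\<omega>. mix_dens (k \<omega>) (\<lambda>j x. v x (\<eta> j \<omega> x)) (\<lambda>j x. \<theta> j \<omega>)) q))
    \<and>
   \<comment> \<open>w-DMBPP(lambda, Psi_v, Psi_z, H)\<close>
    (nat_rv M k \<and> iid_rvs M {0..1} vw \<and> iid_procs M X z \<and> H_family X h \<and>
     indep_ingredients M (nat_sigma M k) (\<lambda>j. rv_sigma M (vw j)) (\<lambda>j. proc_sigma M X (z j)) \<and>
     cond_i M X z h \<and> cond_iii M k \<and> (\<forall>j. full_support M {0..1} (vw j))
     \<longrightarrow> (\<forall>q\<in>Dtilde X. in_Linf_support M X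
            (\<lambda>\<omega>. mix_dens (k \<omega>) (\<lambda>j x. vw j \<omega>) (\<lambda>j x. h x (z j \<omega> x))) q))"
  using assms
  by (blast intro: in_Linf_support_DMBPP in_Linf_support_theta_DMBPP in_Linf_support_w_DMBPP)

end
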